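(* Let $\beta$ be a well-formed execution of the SODA algorithm described in the context, and let $\Pi$ be the set of operations of $\beta$ to which a tag is associated as follows: for a write $\pi$, $(tag(\pi),value(\pi))=(t_w,v)$ is the pair it disseminates in its put phase; for a completed read $\pi$, $(tag(\pi),value(\pi))=(t_{read},v)$ where $v$ is the returned value and $t_{read}$ is the tag of the $k$ coded elements it decoded. Define $\pi\prec\phi$ iff $tag(\pi)<tag(\phi)$, or $tag(\pi)=tag(\phi)$ with $\pi$ a write and $\phi$ a read. Then $\prec$ satisfies: (P1) there are no operations $\pi_1,\pi_2$ such that $\pi_1$ completes before $\pi_2$ is invoked and yet $\pi_2\prec\pi_1$; (P2) if $\pi_1$ is a write and $\pi_2$ is any other operation, then $\pi_1\prec\pi_2$ or $\pi_2\prec\pi_1$; (P3) every read returns the value of the last write preceding it with respect to $\prec$, and returns the initial value $v_0$ if no write precedes it.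
   Context: System model: asynchronous message passing with writers $\mathcal{W}$, readers $\mathcal{R}$ and $n$ servers $\mathcal{S}$ ordered $s_1<\dots<s_n$; reliable point-to-point channels between every client and server and every two servers (message eventually delivered if destination does not crash, even if the sender crashes; arbitrary delays and order). Processes fail by crashing only; any number of clients and at most $f$ servers crash, $1\le f\le (n-1)/2$. Well-formed: each client invokes an operation only after its previous one completed. An operation precedes another if its response occurs before the other's invocation. Coding: values in a set $V$ with initial value $v_0$; an $[n,k]$ MDS code with $k=n-f$, encoder $\Phi$ ($\Phi_s(v)$ = coded element for server $s$) and decoder $\Phi^{-1}$ recovering $v$ from any $k$ coded elements of $v$ (with known server indices). Tags: pairs $t=(z,w)$, $z\in\mathbb{N}$, $w\in\mathcal{W}$, with $t_2>t_1$ iff $t_2.z>t_1.z$, or $t_2.z=t_1.z$ and $t_2.w>t_1.w$; $t_0$ is the initial tag (smaller than all others). Dissemination primitives. md-value-send$(t,v)$ by a writer: $(t,v)$ is sent to servers $s_1,\dots,s_{f+1}$; each such $s_i$, on first receipt, forwards $(t,v)$ to $s_{i+1},\dots,s_{f+1}$, sends $(t,\Phi_{s'}(v))$ to every other server $s'$, and then delivers $(t,\Phi_{s_i}(v))$ locally; each other server delivers the coded element $(t,\Phi_{s}(v))$ it receives ("md-value-deliver"). md-meta-send$(m)$: identical, except every server delivers the metadata message $m$ itself ("md-meta-deliver"). Each server delivers each disseminated message once. SODA writer $w$, write$(v)$: (get-tag) send a tag query to all servers, wait for responses (their locally stored tags) from a majority, let $t_{max}$ be the highest; (put) set $t_w=(t_{max}.z+1,w)$,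 invoke md-value-send$(t_w,v)$, wait for acknowledgments from $k$ servers, terminate. SODA reader $r$, read: (get-tag) query all servers for their tags, wait for a majority, let $t_r$ be the highest; (get-data) invoke md-meta-send(READ-VALUE,$(r,t_r)$), and collect received pairs $(t,c)$ until $k$ of them, from distinct servers, carry the same tag $t_{read}$; decode $v=\Phi^{-1}$ of these $k$ coded elements; (complete) invoke md-meta-send(READ-COMPLETE,$(r,t_r)$) and return $v$. (Each read carries a unique identifier in addition to $r$.) SODA server $s$: state: a pair $(t,c_s)$, initially $(t_0,\Phi_s(v_0))$; a set $R_c$ of registered pairs $(r,t_r)$, initially empty; a set $H$ of triples $(t,s',r)$, initially empty. On a tag query from a writer or reader: reply with local $t$. On md-value-deliver$(t_w,c'_s)$: for each $(r,t_r)\in R_c$ with $t_w\ge t_r$: send $(t_w,c'_s)$ to $r$, add $(t_w,s,r)$ to $H$, invoke md-meta-send(READ-DISPERSE,$(t_w,s,r)$); then if $t_w>t$ set $(t,c_s)\gets(t_w,c'_s)$; send an acknowledgment to the writer. On md-meta-deliver(READ-VALUE,$(r,t_r)$): if $(t_0,s,r)\in H$, remove from $H$ all triples with reader $r$; else add $(r,t_r)$ to $R_c$ and, if $t\ge t_r$, send $(t,c_s)$ to $r$, add $(t,s,r)$ to $H$ and invoke md-meta-send(READ-DISPERSE,$(t,s,r)$). On md-meta-deliver(READ-COMPLETE,$(r,t_r)$): if some $(r,t'_r)\in R_c$, remove it and remove all triples with reader $r$ from $H$; else add $(t_0,s,r)$ to $H$. On md-meta-deliver(READ-DISPERSE,$(t,s',r)$):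 add $(t,s',r)$ to $H$; if some $(r,t_r)\in R_c$ and the number of triples in $H$ with tag $t$ and reader $r$ is at least $k$, remove $(r,t_r)$ from $R_c$ and remove all triples with reader $r$ from $H$. *)

theory Defs
  imports Main "HOL-Library.Multiset"
begin

datatype 'w tag = T0 | Tag nat 'w

fun tz :: "'w tag \<Rightarrow> nat" where
  "tz T0 = 0"
| "tz (Tag z w) = z"

instantiation tag :: (linorder) linorder
begin

fun less_eq_tag :: "'a tag \<Rightarrow> 'a tag \<Rightarrow> bool" where
  "less_eq_tag T0 _ = True"
| "less_eq_tag (Tag _ _) T0 = False"
| "less_eq_tag (Tag z w) (Tag z' w') = (z < z' \<or> (z = z' \<and> w \<le> w'))"

definition less_tag :: "'a tag \<Rightarrow> 'a tag \<Rightarrow> bool" where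
  "less_tag x y = (x \<le> y \<and> \<not> y \<le> x)"

instance
proof
  fix x y z :: "'a tag"
  show "(x < y) = (x \<le> y \<and> \<not> y \<le> x)" by (simp add: less_tag_def)
  show "x \<le> x" by (cases x) auto
  show "x \<le> y \<Longrightarrow> y \<le> z \<Longrightarrow> x \<le> z"
    by (cases x; cases y; cases z) auto
  show "x \<le> y \<Longrightarrow> y \<le> x \<Longrightarrow> x = y"
    by (cases x; cases y) auto
  show "x \<le> y \<or> y \<le> x"
    by (cases x; cases y) auto
qed

end

text \<open>Servers are the natural numbers 0,...,n-1 (server s_(i+1) is index i); writers have
  type 'w, readers type 'r.\<close>

datatype ('w, 'r) proc = PW 'w | PR 'r | PS nat

text \<open>A read is identified by its reader and a per-reader sequence number (unique read id).\<close>
type_synonym 'r readid = "'r \<times> nat"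

datatype ('w, 'r) meta =
    ReadValue "'r readid" "'w tag"
  | ReadComplete "'r readid" "'w tag"
  | ReadDisperse "'w tag" nat "'r readid"

datatype ('w, 'r, 'v, 'c) msg =
    TagQ nat                       \<comment> \<open>tag query, carries the operation number\<close>
  | TagR nat "'w tag"
  | MDFull "'w tag" 'v             \<comment> \<open>md-value-send: full value, to s_1..s_(f+1)\<close>
  | MDCoded "'w tag" 'c            \<comment> \<open>md-value-send: coded element, to the other servers\<close>
  | MDMeta "('w, 'r) meta"
  | Ack "'w tag"
  | ToReader "'r readid" "'w tag" 'c

text \<open>Keys used by a server to deliver each disseminated message only once.\<close>
datatype ('w, 'r, 'v, 'c) mdkey = KFull "'w tag" 'v | KCoded "'w tag" 'c | KMeta "('w, 'r) meta"

type_synonym ('w, 'r, 'v, 'c) outs = "(('w, 'r) proc \<times> ('w, 'r, 'v, 'c) msg) list"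
type_synonym ('w, 'r, 'v, 'c) packet = "('w, 'r) proc \<times> ('w, 'r) proc \<times> ('w, 'r, 'v, 'c) msg"

record ('w, 'r, 'v, 'c) sst =
  stag :: "'w tag"
  sval :: 'c
  sRc :: "('r readid \<times> 'w tag) set"
  sH :: "('w tag \<times> nat \<times> 'r readid) set"
  sseen :: "('w, 'r, 'v, 'c) mdkey set"

datatype ('w, 'v) wphase = WIdle | WGet nat 'v "(nat \<times> 'w tag) set" | WPut nat "'w tag" "nat set"

text \<open>wlog and wdone are ghost fields: wlog j records the pair (t_w,v) disseminated by the j-th
  write in its put phase; wdone is the set of completed writes.\<close>
record ('w, 'v) wst =
  wph :: "('w, 'v) wphase"
  wcnt :: nat
  wlog :: "nat \<Rightarrow> ('w tag \<times> 'v) option"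
  wdone :: "nat set"

datatype ('w, 'c) rphase = RIdle | RGet nat "(nat \<times> 'w tag) set"
  | RData nat "'w tag" "(nat \<times> 'w tag \<times> 'c) set"

text \<open>rlog is a ghost field: rlog j records (t_read, returned value) of the completed j-th read.\<close>
record ('w, 'v, 'c) rst =
  rph :: "('w, 'c) rphase"
  rcnt :: nat
  rlog :: "nat \<Rightarrow> ('w tag \<times> 'v) option"

text \<open>Global state: multiset of messages in transit, per-process outbox of messages that the
  process still has to send (in order; a crash loses the unsent ones, which models crashes
  in the middle of a sequence of sends), crashed processes and local states.\<close>
record ('w, 'r, 'v, 'c) gst =
  net :: "('w, 'r, 'v, 'c) packet multiset"
  outb :: "('w, 'r) proc \<Rightarrow> ('w, 'r, 'v, 'c) outs"
  crashed :: "('w, 'r) proc set"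
  srv :: "nat \<Rightarrow> ('w, 'r, 'v, 'c) sst"
  wrs :: "'w \<Rightarrow> ('w, 'v) wst"
  rds :: "'r \<Rightarrow> ('w, 'v, 'c) rst"

datatype ('w, 'r, 'v, 'c) action =
    Skip
  | Send "('w, 'r) proc"
  | Deliver "('w, 'r, 'v, 'c) packet"
  | Crash "('w, 'r) proc"
  | InvokeW 'w 'v
  | InvokeR 'r

definition md_value_send :: "nat \<Rightarrow> 'w tag \<Rightarrow> 'v \<Rightarrow> ('w, 'r, 'v, 'c) outs" where
  "md_value_send f t v = map (\<lambda>j. (PS j, MDFull t v)) [0..<Suc f]"

definition md_meta_send :: "nat \<Rightarrow> ('w, 'r) meta \<Rightarrow> ('w, 'r, 'v, 'c) outs" where
  "md_meta_send f m = map (\<lambda>j. (PS j, MDMeta m)) [0..<Suc f]"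

fun ack_out :: "'w tag \<Rightarrow> ('w, 'r, 'v, 'c) outs" where
  "ack_out T0 = []"
| "ack_out (Tag z w) = [(PW w, Ack (Tag z w))]"

definition remove_reader :: "'r readid \<Rightarrow> ('w tag \<times> nat \<times> 'r readid) set \<Rightarrow> ('w tag \<times> nat \<times> 'r readid) set" where
  "remove_reader r H = {x \<in> H. snd (snd x) \<noteq> r}"

text \<open>md-value-deliver (t_w, c) at server i.  The registered readers may be served in any order.\<close>
definition value_deliver ::
  "nat \<Rightarrow> nat \<Rightarrow> 'w::linorder tag \<Rightarrow> 'c \<Rightarrow> ('w, 'r, 'v, 'c) sst \<Rightarrow> ('w, 'r, 'v, 'c) sst
     \<Rightarrow> ('w, 'r, 'v, 'c) outs \<Rightarrow> bool" where
  "value_deliver f i t c \<sigma> \<sigma>' os \<longleftrightarrow>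
     (\<exists>xs. distinct xs \<and> set xs = {x \<in> sRc \<sigma>. snd x \<le> t} \<and>
        os = concat (map (\<lambda>x. (PR (fst (fst x)), ToReader (fst x) t c)
                                 # md_meta_send f (ReadDisperse t i (fst x))) xs) @ ack_out t \<and>
        \<sigma>' = (let \<sigma>1 = \<sigma>\<lparr>sH := sH \<sigma> \<union> {(t, i, fst x) | x. x \<in> sRc \<sigma> \<and> snd x \<le> t}\<rparr>
              in if stag \<sigma> < t then \<sigma>1\<lparr>stag := t, sval := c\<rparr> else \<sigma>1))"

text \<open>md-meta-deliver m at server i (k = n - f).\<close>
fun meta_deliver ::
  "nat \<Rightarrow> nat \<Rightarrow> nat \<Rightarrow> ('w::linorder, 'r) meta \<Rightarrow> ('w, 'r, 'v, 'c) sst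
     \<Rightarrow> ('w, 'r, 'v, 'c) sst \<times> ('w, 'r, 'v, 'c) outs" where
  "meta_deliver k f i (ReadValue r tr) \<sigma> =
     (if (T0, i, r) \<in> sH \<sigma> then (\<sigma>\<lparr>sH := remove_reader r (sH \<sigma>)\<rparr>, [])
      else (let \<sigma>1 = \<sigma>\<lparr>sRc := insert (r, tr) (sRc \<sigma>)\<rparr> in
            if tr \<le> stag \<sigma>
            then (\<sigma>1\<lparr>sH := insert (stag \<sigma>, i, r) (sH \<sigma>)\<rparr>,
                  (PR (fst r), ToReader r (stag \<sigma>) (sval \<sigma>))
                    # md_meta_send f (ReadDisperse (stag \<sigma>) i r))
            else (\<sigma>1, [])))"
| "meta_deliver k f i (ReadComplete r tr) \<sigma> =
     (if \<exists>t'. (r, t') \<in> sRc \<sigma>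
      then (\<sigma>\<lparr>sRc := {x \<in> sRc \<sigma>. fst x \<noteq> r}, sH := remove_reader r (sH \<sigma>)\<rparr>, [])
      else (\<sigma>\<lparr>sH := insert (T0, i, r) (sH \<sigma>)\<rparr>, []))"
| "meta_deliver k f i (ReadDisperse t s' r) \<sigma> =
     (let H1 = insert (t, s', r) (sH \<sigma>) in
      if (\<exists>tr. (r, tr) \<in> sRc \<sigma>) \<and> k \<le> card {x \<in> H1. fst x = t \<and> snd (snd x) = r}
      then (\<sigma>\<lparr>sRc := {x \<in> sRc \<sigma>. fst x \<noteq> r}, sH := remove_reader r H1\<rparr>, [])
      else (\<sigma>\<lparr>sH := H1\<rparr>, []))"

definition srv_recv ::
  "nat \<Rightarrow> nat \<Rightarrow> (nat \<Rightarrow> 'v \<Rightarrow> 'c) \<Rightarrow> nat \<Rightarrow> ('w::linorder, 'r) proc \<Rightarrow> ('w, 'r, 'v, 'c) msg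
     \<Rightarrow> ('w, 'r, 'v, 'c) sst \<Rightarrow> ('w, 'r, 'v, 'c) sst \<Rightarrow> ('w, 'r, 'v, 'c) outs \<Rightarrow> bool" where
  "srv_recv n f enc i p m \<sigma> \<sigma>' os \<longleftrightarrow>
    (case m of
       TagQ j \<Rightarrow> \<sigma>' = \<sigma> \<and> os = [(p, TagR j (stag \<sigma>))]
     | MDFull t v \<Rightarrow>
         (if i \<le> f \<and> KFull t v \<notin> sseen \<sigma>
          then (\<exists>os2. value_deliver f i t (enc i v) (\<sigma>\<lparr>sseen := insert (KFull t v) (sseen \<sigma>)\<rparr>) \<sigma>' os2 \<and>
                  os = map (\<lambda>j. (PS j, MDFull t v)) [Suc i..<Suc f]
                       @ map (\<lambda>j. (PS j, MDCoded t (enc j v))) [Suc f..<n] @ os2)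
          else \<sigma>' = \<sigma> \<and> os = [])
     | MDCoded t c \<Rightarrow>
         (if f < i \<and> KCoded t c \<notin> sseen \<sigma>
          then value_deliver f i t c (\<sigma>\<lparr>sseen := insert (KCoded t c) (sseen \<sigma>)\<rparr>) \<sigma>' os
          else \<sigma>' = \<sigma> \<and> os = [])
     | MDMeta mm \<Rightarrow>
         (if KMeta mm \<notin> sseen \<sigma>
          then (let (\<sigma>2, os2) = meta_deliver (n - f) f i mm (\<sigma>\<lparr>sseen := insert (KMeta mm) (sseen \<sigma>)\<rparr>)
                in \<sigma>' = \<sigma>2 \<and>
                   os = (if i \<le> f then map (\<lambda>j. (PS j, MDMeta mm)) [Suc i..<Suc f]
                                      @ map (\<lambda>j. (PS j, MDMeta mm)) [Suc f..<n]
                         else []) @ os2)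
          else \<sigma>' = \<sigma> \<and> os = [])
     | _ \<Rightarrow> \<sigma>' = \<sigma> \<and> os = [])"

fun wr_recv ::
  "nat \<Rightarrow> nat \<Rightarrow> 'w::linorder \<Rightarrow> ('w, 'r) proc \<Rightarrow> ('w, 'r, 'v, 'c) msg
     \<Rightarrow> ('w, 'v) wst \<Rightarrow> ('w, 'v) wst \<times> ('w, 'r, 'v, 'c) outs" where
  "wr_recv n f w (PS s) (TagR j t) \<sigma> =
     (case wph \<sigma> of
        WGet j' v R \<Rightarrow>
          (if j = j' then
             (let R' = insert (s, t) R in
              if n < 2 * card (fst ` R') then
                (let tw = Tag (Suc (tz (Max (snd ` R')))) w in
                 (\<sigma>\<lparr>wph := WPut j tw {}, wlog := (wlog \<sigma>)(j \<mapsto> (tw, v))\<rparr>, md_value_send f tw v))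
              else (\<sigma>\<lparr>wph := WGet j v R'\<rparr>, []))
           else (\<sigma>, []))
      | _ \<Rightarrow> (\<sigma>, []))"
| "wr_recv n f w (PS s) (Ack t) \<sigma> =
     (case wph \<sigma> of
        WPut j tw A \<Rightarrow>
          (if t = tw then
             (let A' = insert s A in
              if n - f \<le> card A' then (\<sigma>\<lparr>wph := WIdle, wdone := insert j (wdone \<sigma>)\<rparr>, [])
              else (\<sigma>\<lparr>wph := WPut j tw A'\<rparr>, []))
           else (\<sigma>, []))
      | _ \<Rightarrow> (\<sigma>, []))"
| "wr_recv n f w _ _ \<sigma> = (\<sigma>, [])"

text \<open>Reader r receives message m from process p.  dec is the MDS decoder; it is applied to the
  k coded elements (with their server indices) carrying tag t_read.\<close>
definition rd_recv ::
  "nat \<Rightarrow> nat \<Rightarrow> ((nat \<Rightarrow> 'c option) \<Rightarrow> 'v) \<Rightarrow> 'r \<Rightarrow> ('w::linorder, 'r) proc \<Rightarrow> ('w, 'r, 'v, 'c) msg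
     \<Rightarrow> ('w, 'v, 'c) rst \<Rightarrow> ('w, 'v, 'c) rst \<Rightarrow> ('w, 'r, 'v, 'c) outs \<Rightarrow> bool" where
  "rd_recv n f dec r p m \<sigma> \<sigma>' os \<longleftrightarrow>
    (case (p, m, rph \<sigma>) of
       (PS s, TagR j t, RGet j' R) \<Rightarrow>
         (if j = j' then
            (let R' = insert (s, t) R in
             if n < 2 * card (fst ` R') then
               (let tr = Max (snd ` R') in
                \<sigma>' = \<sigma>\<lparr>rph := RData j tr {}\<rparr> \<and> os = md_meta_send f (ReadValue (r, j) tr))
             else \<sigma>' = \<sigma>\<lparr>rph := RGet j R'\<rparr> \<and> os = [])
          else \<sigma>' = \<sigma> \<and> os = [])
     | (PS s, ToReader rid t c, RData j tr P) \<Rightarrow>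
         (if rid = (r, j) then
            (let P' = insert (s, t, c) P in
             if n - f \<le> card {s'. \<exists>c'. (s', t, c') \<in> P'} then
               (\<exists>S g. S \<subseteq> {s'. (s', t, g s') \<in> P'} \<and> card S = n - f \<and>
                   \<sigma>' = \<sigma>\<lparr>rph := RIdle,
                           rlog := (rlog \<sigma>)(j \<mapsto> (t, dec (\<lambda>x. if x \<in> S then Some (g x) else None)))\<rparr> \<and>
                   os = md_meta_send f (ReadComplete (r, j) tr))
             else \<sigma>' = \<sigma>\<lparr>rph := RData j tr P'\<rparr> \<and> os = [])
          else \<sigma>' = \<sigma> \<and> os = [])
     | _ \<Rightarrow> \<sigma>' = \<sigma> \<and> os = [])"

definition init_state :: "nat \<Rightarrow> (nat \<Rightarrow> 'v \<Rightarrow> 'c) \<Rightarrow> 'v \<Rightarrow> ('w, 'r, 'v, 'c) gst" where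
  "init_state n enc v0 =
     \<lparr>net = {#}, outb = (\<lambda>_. []), crashed = {},
      srv = (\<lambda>i. \<lparr>stag = T0, sval = enc i v0, sRc = {}, sH = {}, sseen = {}\<rparr>),
      wrs = (\<lambda>_. \<lparr>wph = WIdle, wcnt = 0, wlog = (\<lambda>_. None), wdone = {}\<rparr>),
      rds = (\<lambda>_. \<lparr>rph = RIdle, rcnt = 0, rlog = (\<lambda>_. None)\<rparr>)\<rparr>"

text \<open>One atomic step.  Well-formedness is built in: a client can only be invoked when idle.\<close>
definition step ::
  "nat \<Rightarrow> nat \<Rightarrow> (nat \<Rightarrow> 'v \<Rightarrow> 'c) \<Rightarrow> ((nat \<Rightarrow> 'c option) \<Rightarrow> 'v)
     \<Rightarrow> ('w::linorder, 'r, 'v, 'c) gst \<Rightarrow> ('w, 'r, 'v, 'c) action \<Rightarrow> ('w, 'r, 'v, 'c) gst \<Rightarrow> bool" where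
  "step n f enc dec s a s' \<longleftrightarrow>
    (case a of
       Skip \<Rightarrow> s' = s
     | Send p \<Rightarrow> p \<notin> crashed s \<and> outb s p \<noteq> [] \<and>
         s' = s\<lparr>net := net s + {# (p, fst (hd (outb s p)), snd (hd (outb s p))) #},
                outb := (outb s)(p := tl (outb s p))\<rparr>
     | Deliver pk \<Rightarrow>
         (case pk of (p, q, m) \<Rightarrow>
           pk \<in># net s \<and> q \<notin> crashed s \<and>
           (let s1 = s\<lparr>net := net s - {# pk #}\<rparr> in
            case q of
              PS i \<Rightarrow> (\<exists>\<sigma>' os. srv_recv n f enc i p m (srv s i) \<sigma>' os \<and>
                         s' = s1\<lparr>srv := (srv s)(i := \<sigma>'), outb := (outb s)(q := outb s q @ os)\<rparr>)
            | PW w \<Rightarrow> (case wr_recv n f w p m (wrs s w) of (\<sigma>', os) \<Rightarrow>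
                         s' = s1\<lparr>wrs := (wrs s)(w := \<sigma>'), outb := (outb s)(q := outb s q @ os)\<rparr>)
            | PR r \<Rightarrow> (\<exists>\<sigma>' os. rd_recv n f dec r p m (rds s r) \<sigma>' os \<and>
                         s' = s1\<lparr>rds := (rds s)(r := \<sigma>'), outb := (outb s)(q := outb s q @ os)\<rparr>)))
     | Crash p \<Rightarrow> p \<notin> crashed s \<and> (\<forall>i. p = PS i \<longrightarrow> i < n) \<and>
         s' = s\<lparr>crashed := insert p (crashed s)\<rparr>
     | InvokeW w v \<Rightarrow> PW w \<notin> crashed s \<and> wph (wrs s w) = WIdle \<and>
         (let j = Suc (wcnt (wrs s w)) in
          s' = s\<lparr>wrs := (wrs s)(w := (wrs s w)\<lparr>wph := WGet j v {}, wcnt := j\<rparr>),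
                 outb := (outb s)(PW w := outb s (PW w) @ map (\<lambda>i. (PS i, TagQ j)) [0..<n])\<rparr>)
     | InvokeR r \<Rightarrow> PR r \<notin> crashed s \<and> rph (rds s r) = RIdle \<and>
         (let j = Suc (rcnt (rds s r)) in
          s' = s\<lparr>rds := (rds s)(r := (rds s r)\<lparr>rph := RGet j {}, rcnt := j\<rparr>),
                 outb := (outb s)(PR r := outb s (PR r) @ map (\<lambda>i. (PS i, TagQ j)) [0..<n])\<rparr>))"

text \<open>An execution (finite executions are those that eventually only Skip).\<close>
definition soda_execution ::
  "nat \<Rightarrow> nat \<Rightarrow> (nat \<Rightarrow> 'v \<Rightarrow> 'c) \<Rightarrow> ((nat \<Rightarrow> 'c option) \<Rightarrow> 'v) \<Rightarrow> 'v
     \<Rightarrow> (nat \<Rightarrow> ('w::linorder, 'r, 'v, 'c) gst) \<Rightarrow> (nat \<Rightarrow> ('w, 'r, 'v, 'c) action) \<Rightarrow> bool" where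
  "soda_execution n f enc dec v0 st act \<longleftrightarrow>
     st 0 = init_state n enc v0 \<and> (\<forall>i. step n f enc dec (st i) (act i) (st (Suc i)))"

text \<open>Reliable channels: a message in transit is eventually delivered if its destination never
  crashes (even if the sender crashed); a non-crashed process eventually performs its pending sends.\<close>
definition reliable ::
  "(nat \<Rightarrow> ('w, 'r, 'v, 'c) gst) \<Rightarrow> (nat \<Rightarrow> ('w, 'r, 'v, 'c) action) \<Rightarrow> bool" where
  "reliable st act \<longleftrightarrow>
     (\<forall>i pk. pk \<in># net (st i) \<and> (\<forall>j. fst (snd pk) \<notin> crashed (st j)) \<longrightarrow> (\<exists>j\<ge>i. act j = Deliver pk)) \<and>
     (\<forall>i p. outb (st i) p \<noteq> [] \<and> (\<forall>j. p \<notin> crashed (st j)) \<longrightarrow> (\<exists>j\<ge>i. act j = Send p))"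

text \<open>Operation OpW w j is the j-th write of writer w, OpR r j the j-th read of reader r.\<close>
datatype ('w, 'r) oper = OpW 'w nat | OpR 'r nat

fun is_write :: "('w, 'r) oper \<Rightarrow> bool" where
  "is_write (OpW _ _) = True" | "is_write (OpR _ _) = False"

fun is_read :: "('w, 'r) oper \<Rightarrow> bool" where
  "is_read (OpW _ _) = False" | "is_read (OpR _ _) = True"

fun oplog :: "('w, 'r, 'v, 'c) gst \<Rightarrow> ('w, 'r) oper \<Rightarrow> ('w tag \<times> 'v) option" where
  "oplog s (OpW w j) = wlog (wrs s w) j"
| "oplog s (OpR r j) = rlog (rds s r) j"

text \<open>Pi: operations with an associated tag (writes that reached the put phase, completed reads).\<close>
definition in_Pi :: "(nat \<Rightarrow> ('w, 'r, 'v, 'c) gst) \<Rightarrow> ('w, 'r) oper \<Rightarrow> bool" where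
  "in_Pi st \<pi> \<longleftrightarrow> (\<exists>i. oplog (st i) \<pi> \<noteq> None)"

definition optv :: "(nat \<Rightarrow> ('w, 'r, 'v, 'c) gst) \<Rightarrow> ('w, 'r) oper \<Rightarrow> 'w tag \<times> 'v" where
  "optv st \<pi> = the (oplog (st (SOME i. oplog (st i) \<pi> \<noteq> None)) \<pi>)"

definition optag :: "(nat \<Rightarrow> ('w, 'r, 'v, 'c) gst) \<Rightarrow> ('w, 'r) oper \<Rightarrow> 'w tag" where
  "optag st \<pi> = fst (optv st \<pi>)"

definition opval :: "(nat \<Rightarrow> ('w, 'r, 'v, 'c) gst) \<Rightarrow> ('w, 'r) oper \<Rightarrow> 'v" where
  "opval st \<pi> = snd (optv st \<pi>)"

fun opcnt :: "('w, 'r, 'v, 'c) gst \<Rightarrow> ('w, 'r) oper \<Rightarrow> nat" where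
  "opcnt s (OpW w _) = wcnt (wrs s w)"
| "opcnt s (OpR r _) = rcnt (rds s r)"

fun opnum :: "('w, 'r) oper \<Rightarrow> nat" where
  "opnum (OpW _ j) = j" | "opnum (OpR _ j) = j"

text \<open>The invocation of operation pi is step i (transition st i -> st (Suc i)).\<close>
definition invoked_at :: "(nat \<Rightarrow> ('w, 'r, 'v, 'c) gst) \<Rightarrow> ('w, 'r) oper \<Rightarrow> nat \<Rightarrow> bool" where
  "invoked_at st \<pi> i \<longleftrightarrow> opcnt (st i) \<pi> < opnum \<pi> \<and> opnum \<pi> \<le> opcnt (st (Suc i)) \<pi>"

text \<open>The response of operation pi is step i.\<close>
fun completed_at :: "(nat \<Rightarrow> ('w, 'r, 'v, 'c) gst) \<Rightarrow> ('w, 'r) oper \<Rightarrow> nat \<Rightarrow> bool" where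
  "completed_at st (OpW w j) i \<longleftrightarrow> j \<notin> wdone (wrs (st i) w) \<and> j \<in> wdone (wrs (st (Suc i)) w)"
| "completed_at st (OpR r j) i \<longleftrightarrow> rlog (rds (st i) r) j = None \<and> rlog (rds (st (Suc i)) r) j \<noteq> None"

definition precedes :: "(nat \<Rightarrow> ('w, 'r, 'v, 'c) gst) \<Rightarrow> ('w, 'r) oper \<Rightarrow> ('w, 'r) oper \<Rightarrow> bool" where
  "precedes st \<pi>1 \<pi>2 \<longleftrightarrow> (\<exists>i1 i2. completed_at st \<pi>1 i1 \<and> invoked_at st \<pi>2 i2 \<and> i1 < i2)"

definition tag_order :: "(nat \<Rightarrow> ('w::linorder, 'r, 'v, 'c) gst) \<Rightarrow> ('w, 'r) oper \<Rightarrow> ('w, 'r) oper \<Rightarrow> bool" where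
  "tag_order st \<pi> \<phi> \<longleftrightarrow> in_Pi st \<pi> \<and> in_Pi st \<phi> \<and>
     (optag st \<pi> < optag st \<phi> \<or> (optag st \<pi> = optag st \<phi> \<and> is_write \<pi> \<and> is_read \<phi>))"

end

theory Submission
  imports Defs
begin

text \<open>All three properties rest on one invariant of the reachable states, proved by induction
  along the execution. Its essential part refers to the execution as a whole: a write's tag
  exceeds, and a read's t_r bounds, every tag that a quorum of n - f servers held before the
  operation was invoked, because the get-tag phase hears from a majority, a majority meets every
  quorum, and server tags only grow. Moreover completed writes and reads leave their tag at a
  quorum, and every coded element a server holds or sends is the codeword of v_0 (tag t_0) or of
  the value some write disseminated with that tag. Hence real-time order cannot invert the tag
  order (P1); the successive writes of a writer get increasing tags, so distinct writes have
  distinct tags (P2); and the n - f elements a read decodes all encode the value of the unique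
  write with tag t_read, or v_0 (P3).\<close>

lemma value_deliver_state:
  assumes "value_deliver f i t c \<sigma> \<sigma>' os"
  shows "stag \<sigma>' = max (stag \<sigma>) t \<and> sval \<sigma>' = (if stag \<sigma> < t then c else sval \<sigma>) \<and> sRc \<sigma>' = sRc \<sigma>"
proof -
  have "\<sigma>' = (let \<sigma>1 = \<sigma>\<lparr>sH := sH \<sigma> \<union> {(t, i, fst x) | x. x \<in> sRc \<sigma> \<and> snd x \<le> t}\<rparr>
              in if stag \<sigma> < t then \<sigma>1\<lparr>stag := t, sval := c\<rparr> else \<sigma>1)"
    using assms unfolding value_deliver_def by blast
  then show ?thesis by (cases "stag \<sigma> < t") (auto simp: Let_def max_def dest: leD less_imp_le)
qed
lemma value_deliver_outputs:
  assumes "value_deliver f i t c \<sigma> \<sigma>' os" "(d, m) \<in> set os"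
  shows "(\<exists>rid tr. d = PR (fst rid) \<and> m = ToReader rid t c \<and> (rid, tr) \<in> sRc \<sigma> \<and> tr \<le> t)
       \<or> (\<exists>j mm. d = PS j \<and> j \<le> f \<and> m = MDMeta mm \<and> (\<forall>rid tr. mm \<noteq> ReadValue rid tr))
       \<or> (m = Ack t \<and> (\<forall>j. d \<noteq> PS j))"
proof -
  obtain xs where xs: "set xs = {x \<in> sRc \<sigma>. snd x \<le> t}" and
    os: "os = concat (map (\<lambda>x. (PR (fst (fst x)), ToReader (fst x) t c)
                                 # md_meta_send f (ReadDisperse t i (fst x))) xs) @ ack_out t"
    using assms(1) unfolding value_deliver_def by blast
  have "(d, m) \<in> set (ack_out t) \<Longrightarrow> m = Ack t \<and> (\<forall>j. d \<noteq> PS j)" by (cases t) auto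
  then show ?thesis using assms(2) xs unfolding os by (auto simp: md_meta_send_def)
qed

lemma meta_deliver_state:
  assumes "meta_deliver k f i mm \<sigma> = (\<sigma>', os)"
  shows "stag \<sigma>' = stag \<sigma> \<and> sval \<sigma>' = sval \<sigma> \<and>
     sRc \<sigma>' \<subseteq> sRc \<sigma> \<union> {(rid, tr). mm = ReadValue rid tr}"
  using assms by (cases mm) (auto simp: Let_def split: if_splits)

lemma in_set_md_meta_send:
  "(d, m) \<in> set (md_meta_send f mm) \<Longrightarrow> \<exists>j\<le>f. d = PS j \<and> m = MDMeta mm"
  by (auto simp: md_meta_send_def less_Suc_eq_le)

lemma meta_deliver_outputs:
  assumes "meta_deliver k f i mm \<sigma> = (\<sigma>', os)" "(d, m) \<in> set os"
  shows "(\<exists>rid tr. d = PR (fst rid) \<and> mm = ReadValue rid tr \<and> tr \<le> stag \<sigma> \<and> m = ToReader rid (stag \<sigma>) (sval \<sigma>))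
       \<or> (\<exists>j mm'. d = PS j \<and> j \<le> f \<and> m = MDMeta mm' \<and> (\<forall>rid tr. mm' \<noteq> ReadValue rid tr))"
proof -
  have "\<exists>rid tr. mm = ReadValue rid tr \<and> tr \<le> stag \<sigma> \<and>
      os = (PR (fst rid), ToReader rid (stag \<sigma>) (sval \<sigma>)) # md_meta_send f (ReadDisperse (stag \<sigma>) i rid)"
    using assms by (cases mm) (auto simp: Let_def split: if_splits)
  then obtain rid tr where mm: "mm = ReadValue rid tr" "tr \<le> stag \<sigma>"
    and os: "os = (PR (fst rid), ToReader rid (stag \<sigma>) (sval \<sigma>)) # md_meta_send f (ReadDisperse (stag \<sigma>) i rid)"
    by blast
  show ?thesis
  proof (cases "(d, m) \<in> set (md_meta_send f (ReadDisperse (stag \<sigma>) i rid))")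
    case True
    then show ?thesis by (blast dest: in_set_md_meta_send)
  next
    case False
    then have "d = PR (fst rid) \<and> m = ToReader rid (stag \<sigma>) (sval \<sigma>)" using assms(2) os by auto
    then show ?thesis using mm by blast
  qed
qed
text \<open>What a server may send in reply to m, parametrised by the properties it needs to preserve:
  G holds of every (tag, coded element) pair the server stores, FV of every disseminated
  (tag, value) pair, and Q of every registered read.\<close>
definition server_output_ok :: "(nat \<Rightarrow> 'v \<Rightarrow> 'c) \<Rightarrow> ('w::linorder tag \<Rightarrow> 'c \<Rightarrow> bool)
    \<Rightarrow> ('w tag \<Rightarrow> 'v \<Rightarrow> bool) \<Rightarrow> ('r readid \<Rightarrow> 'w tag \<Rightarrow> bool) \<Rightarrow> ('w, 'r) proc \<Rightarrow> ('w, 'r, 'v, 'c) msg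
    \<Rightarrow> ('w, 'r, 'v, 'c) sst \<Rightarrow> ('w, 'r) proc \<Rightarrow> ('w, 'r, 'v, 'c) msg \<Rightarrow> bool" where
  "server_output_ok enc G FV Q p m \<sigma>' d m' \<longleftrightarrow> (case m' of
     TagR j t \<Rightarrow> m = TagQ j \<and> d = p \<and> t = stag \<sigma>'
   | MDFull t v \<Rightarrow> FV t v
   | MDCoded t c \<Rightarrow> (\<forall>j. d = PS j \<longrightarrow> (\<exists>v. FV t v \<and> c = enc j v))
   | MDMeta mm \<Rightarrow> (\<forall>rid tr. mm = ReadValue rid tr \<longrightarrow> Q rid tr)
   | Ack t \<Rightarrow> t \<le> stag \<sigma>'
   | ToReader rid t c \<Rightarrow> t \<le> stag \<sigma>' \<and> G t c \<and> Q rid t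
   | TagQ _ \<Rightarrow> False)"

lemma value_deliver_preserves:
  assumes vd: "value_deliver f i t c \<sigma> \<sigma>' os" and fn: "f < n"
    and G0: "G (stag \<sigma>) (sval \<sigma>)" and Gt: "G t c"
    and RQ: "\<forall>rid tr. (rid, tr) \<in> sRc \<sigma> \<longrightarrow> Q rid tr"
    and Qm: "\<forall>rid tr t. Q rid tr \<longrightarrow> tr \<le> t \<longrightarrow> Q rid t"
  shows "stag \<sigma> \<le> stag \<sigma>' \<and> t \<le> stag \<sigma>' \<and> G (stag \<sigma>') (sval \<sigma>') \<and> sRc \<sigma>' = sRc \<sigma> \<and>
    (\<forall>d m'. (d, m') \<in> set os \<longrightarrow> (\<forall>j. d = PS j \<longrightarrow> j < n) \<and> server_output_ok enc G FV Q p m \<sigma>' d m')"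
proof -
  note state = value_deliver_state[OF vd]
  have tags: "stag \<sigma> \<le> stag \<sigma>'" "t \<le> stag \<sigma>'" using state by auto
  have "G (stag \<sigma>') (sval \<sigma>')" using state G0 Gt by (auto simp: max_def)
  moreover have "(\<forall>j. d = PS j \<longrightarrow> j < n) \<and> server_output_ok enc G FV Q p m \<sigma>' d m'"
    if "(d, m') \<in> set os" for d m'
    using value_deliver_outputs[OF vd that] tags Gt RQ Qm fn
    unfolding server_output_ok_def by (auto; metis)
  ultimately show ?thesis using tags state by blast
qed

lemma meta_deliver_preserves:
  assumes md: "meta_deliver k f i mm \<sigma> = (\<sigma>', os)" and fn: "f < n"
    and G0: "G (stag \<sigma>) (sval \<sigma>)"
    and RQ: "\<forall>rid tr. (rid, tr) \<in> sRc \<sigma> \<longrightarrow> Q rid tr"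
    and Qm: "\<forall>rid tr t. Q rid tr \<longrightarrow> tr \<le> t \<longrightarrow> Q rid t"
    and MQ: "\<forall>rid tr. mm = ReadValue rid tr \<longrightarrow> Q rid tr"
  shows "stag \<sigma>' = stag \<sigma> \<and> sval \<sigma>' = sval \<sigma> \<and> (\<forall>rid tr. (rid, tr) \<in> sRc \<sigma>' \<longrightarrow> Q rid tr) \<and>
    (\<forall>d m'. (d, m') \<in> set os \<longrightarrow> (\<forall>j. d = PS j \<longrightarrow> j < n) \<and> server_output_ok enc G FV Q p m \<sigma>' d m')"
proof -
  note state = meta_deliver_state[OF md]
  have "(\<forall>j. d = PS j \<longrightarrow> j < n) \<and> server_output_ok enc G FV Q p m \<sigma>' d m'"
    if "(d, m') \<in> set os" for d m'
    using meta_deliver_outputs[OF md that] state G0 RQ Qm fn MQ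
    unfolding server_output_ok_def by (auto; metis)
  then show ?thesis using state RQ MQ by auto
qed

lemma srv_recv_preserves:
  fixes \<sigma> :: "('w::linorder, 'r, 'v, 'c) sst"
  assumes sr: "srv_recv n f enc i p m \<sigma> \<sigma>' os"
  and fn: "f < n" and pn: "\<forall>j. p = PS j \<longrightarrow> j < n"
  and G0: "G (stag \<sigma>) (sval \<sigma>)"
  and GF: "\<forall>t v. m = MDFull t v \<longrightarrow> G t (enc i v) \<and> FV t v"
  and GC: "\<forall>t c. m = MDCoded t c \<longrightarrow> G t c"
  and RQ: "\<forall>rid tr. (rid, tr) \<in> sRc \<sigma> \<longrightarrow> Q rid tr"
  and Qm: "\<forall>rid tr t. Q rid tr \<longrightarrow> tr \<le> t \<longrightarrow> Q rid t"
  and MQ: "\<forall>rid tr. m = MDMeta (ReadValue rid tr) \<longrightarrow> Q rid tr"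
  shows "stag \<sigma> \<le> stag \<sigma>' \<and> G (stag \<sigma>') (sval \<sigma>') \<and> (\<forall>rid tr. (rid, tr) \<in> sRc \<sigma>' \<longrightarrow> Q rid tr) \<and>
    (\<forall>d m'. (d, m') \<in> set os \<longrightarrow> (\<forall>j. d = PS j \<longrightarrow> j < n) \<and> server_output_ok enc G FV Q p m \<sigma>' d m')"
proof (cases m)
  case (TagQ j)
  then show ?thesis using sr G0 RQ pn by (auto simp: srv_recv_def server_output_ok_def)
next
  case (MDFull t v)
  show ?thesis
  proof (cases "i \<le> f \<and> KFull t v \<notin> sseen \<sigma>")
    case True
    then obtain os2 where vd: "value_deliver f i t (enc i v) (\<sigma>\<lparr>sseen := insert (KFull t v) (sseen \<sigma>)\<rparr>) \<sigma>' os2"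
      and os: "os = map (\<lambda>j. (PS j, MDFull t v)) [Suc i..<Suc f]
                       @ map (\<lambda>j. (PS j, MDCoded t (enc j v))) [Suc f..<n] @ os2"
      using sr MDFull by (auto simp: srv_recv_def)
    have "G t (enc i v)" "FV t v" using GF MDFull by auto
    then show ?thesis using value_deliver_preserves[OF vd fn, where G = G and Q = Q and FV = FV and p = p and m = m] G0 RQ Qm fn
      unfolding os by (auto simp: server_output_ok_def)
  next
    case False
    then show ?thesis using sr MDFull G0 RQ by (auto simp: srv_recv_def)
  qed
next
  case (MDCoded t c)
  show ?thesis
  proof (cases "f < i \<and> KCoded t c \<notin> sseen \<sigma>")
    case True
    then have vd: "value_deliver f i t c (\<sigma>\<lparr>sseen := insert (KCoded t c) (sseen \<sigma>)\<rparr>) \<sigma>' os"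
      using sr MDCoded by (auto simp: srv_recv_def)
    show ?thesis using value_deliver_preserves[OF vd fn, where G = G and Q = Q and FV = FV and p = p and m = m] G0 GC RQ Qm MDCoded by auto
  next
    case False
    then show ?thesis using sr MDCoded G0 RQ by (auto simp: srv_recv_def)
  qed
next
  case (MDMeta mm)
  show ?thesis
  proof (cases "KMeta mm \<notin> sseen \<sigma>")
    case True
    obtain \<sigma>2 os2 where md: "meta_deliver (n - f) f i mm (\<sigma>\<lparr>sseen := insert (KMeta mm) (sseen \<sigma>)\<rparr>) = (\<sigma>2, os2)"
      by (metis prod.exhaust)
    have \<sigma>2: "\<sigma>' = \<sigma>2" and os: "os = (if i \<le> f then map (\<lambda>j. (PS j, MDMeta mm)) [Suc i..<Suc f]
                                      @ map (\<lambda>j. (PS j, MDMeta mm)) [Suc f..<n]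
                         else []) @ os2"
      using sr MDMeta True md by (auto simp: srv_recv_def)
    have md_ok: "stag \<sigma>' = stag \<sigma> \<and> sval \<sigma>' = sval \<sigma> \<and> (\<forall>rid tr. (rid, tr) \<in> sRc \<sigma>' \<longrightarrow> Q rid tr) \<and>
        (\<forall>d m'. (d, m') \<in> set os2 \<longrightarrow> (\<forall>j. d = PS j \<longrightarrow> j < n) \<and> server_output_ok enc G FV Q p m \<sigma>' d m')"
      using meta_deliver_preserves[OF md fn, where G = G and Q = Q and FV = FV and p = p and m = m]
        G0 RQ Qm MQ MDMeta \<sigma>2 by simp
    have forwarded: "(\<forall>j. d = PS j \<longrightarrow> j < n) \<and> server_output_ok enc G FV Q p m \<sigma>' d m'"
      if "(d, m') \<in> set os" "(d, m') \<notin> set os2" for d m'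
      using that MQ MDMeta fn unfolding os by (auto simp: server_output_ok_def split: if_splits)
    have "(\<forall>j. d = PS j \<longrightarrow> j < n) \<and> server_output_ok enc G FV Q p m \<sigma>' d m'"
      if "(d, m') \<in> set os" for d m'
      using md_ok forwarded[OF that] by blast
    then show ?thesis using md_ok G0 by simp
  next
    case False
    then show ?thesis using sr MDMeta G0 RQ by (auto simp: srv_recv_def)
  qed
qed (use sr G0 RQ in \<open>auto simp: srv_recv_def\<close>)

lemma srv_recv_stag_mono:
  assumes "srv_recv n f enc i p m \<sigma> \<sigma>' os"
  shows "stag \<sigma> \<le> stag \<sigma>'"
proof (cases m)
  case (MDFull t v) then show ?thesis using assms
    by (auto simp: srv_recv_def dest!: value_deliver_state split: if_splits)
next
  case (MDCoded t v) then show ?thesis using assms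
    by (auto simp: srv_recv_def dest!: value_deliver_state split: if_splits)
next
  case (MDMeta mm)
  obtain \<sigma>2 os2 where md: "meta_deliver (n - f) f i mm (\<sigma>\<lparr>sseen := insert (KMeta mm) (sseen \<sigma>)\<rparr>) = (\<sigma>2, os2)"
    by (metis prod.exhaust)
  show ?thesis using assms MDMeta meta_deliver_state[OF md]
    by (auto simp: srv_recv_def md split: if_splits)
qed (use assms in \<open>auto simp: srv_recv_def\<close>)

lemma wr_recv_wcnt:
  "wr_recv n f w p m \<sigma> = (\<sigma>', os) \<Longrightarrow> wcnt \<sigma>' = wcnt \<sigma>"
  by (cases "(n, f, w, p, m, \<sigma>)" rule: wr_recv.cases) (auto simp: Let_def split: wphase.splits if_splits)

lemma rd_recv_rcnt:
  "rd_recv n f dec r p m \<sigma> \<sigma>' os \<Longrightarrow> rcnt \<sigma>' = rcnt \<sigma>"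
  unfolding rd_recv_def by (auto simp: Let_def split: proc.splits msg.splits rphase.splits if_splits)

lemma step_cases:
  assumes "step n f enc dec s a s'"
  obtains (Skip) "s' = s"
  | (Send) p where "p \<notin> crashed s" "outb s p \<noteq> []"
       "s' = s\<lparr>net := net s + {# (p, fst (hd (outb s p)), snd (hd (outb s p))) #},
                outb := (outb s)(p := tl (outb s p))\<rparr>"
  | (Crash) p where "s' = s\<lparr>crashed := insert p (crashed s)\<rparr>"
  | (InvokeW) w v where "PW w \<notin> crashed s" "wph (wrs s w) = WIdle"
       "s' = s\<lparr>wrs := (wrs s)(w := (wrs s w)\<lparr>wph := WGet (Suc (wcnt (wrs s w))) v {}, wcnt := Suc (wcnt (wrs s w))\<rparr>),
                 outb := (outb s)(PW w := outb s (PW w) @ map (\<lambda>i. (PS i, TagQ (Suc (wcnt (wrs s w))))) [0..<n])\<rparr>"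
  | (InvokeR) r where "PR r \<notin> crashed s" "rph (rds s r) = RIdle"
       "s' = s\<lparr>rds := (rds s)(r := (rds s r)\<lparr>rph := RGet (Suc (rcnt (rds s r))) {}, rcnt := Suc (rcnt (rds s r))\<rparr>),
                 outb := (outb s)(PR r := outb s (PR r) @ map (\<lambda>i. (PS i, TagQ (Suc (rcnt (rds s r))))) [0..<n])\<rparr>"
  | (DeliverS) p i m \<sigma>' os where "(p, PS i, m) \<in># net s" "srv_recv n f enc i p m (srv s i) \<sigma>' os"
       "s' = s\<lparr>net := net s - {# (p, PS i, m) #}, srv := (srv s)(i := \<sigma>'), outb := (outb s)(PS i := outb s (PS i) @ os)\<rparr>"
  | (DeliverW) p w m \<sigma>' os where "(p, PW w, m) \<in># net s" "wr_recv n f w p m (wrs s w) = (\<sigma>', os)"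
       "s' = s\<lparr>net := net s - {# (p, PW w, m) #}, wrs := (wrs s)(w := \<sigma>'), outb := (outb s)(PW w := outb s (PW w) @ os)\<rparr>"
  | (DeliverR) p r m \<sigma>' os where "(p, PR r, m) \<in># net s" "rd_recv n f dec r p m (rds s r) \<sigma>' os"
       "s' = s\<lparr>net := net s - {# (p, PR r, m) #}, rds := (rds s)(r := \<sigma>'), outb := (outb s)(PR r := outb s (PR r) @ os)\<rparr>"
proof (cases a)
  case (Deliver pk)
  obtain p q m where pk: "pk = (p, q, m)" by (metis prod.exhaust)
  show ?thesis
  proof (cases q)
    case (PW w)
    obtain \<sigma>' os where "wr_recv n f w p m (wrs s w) = (\<sigma>', os)" by (metis prod.exhaust)
    then show ?thesis using assms Deliver pk PW DeliverW by (auto simp: step_def Let_def)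
  next
    case (PR r) then show ?thesis using assms Deliver pk DeliverR by (auto simp: step_def Let_def)
  next
    case (PS i) then show ?thesis using assms Deliver pk DeliverS by (auto simp: step_def Let_def)
  qed
qed (use assms in \<open>auto simp: step_def Let_def\<close>)

lemma step_mono:
  assumes "step n f enc dec s a s'"
  shows "stag (srv s i) \<le> stag (srv s' i)" "wcnt (wrs s w) \<le> wcnt (wrs s' w)"
        "rcnt (rds s r) \<le> rcnt (rds s' r)"
  using assms by (cases rule: step_cases; auto dest: srv_recv_stag_mono wr_recv_wcnt rd_recv_rcnt)+

lemma less_Tag_Suc_tz: "T \<le> tm \<Longrightarrow> T < Tag (Suc (tz tm)) (w::'w::linorder)"
  by (cases T; cases tm) (auto simp: less_tag_def)

lemma quorum_majority_inter:
  assumes "A \<subseteq> {..<n}" "n - f \<le> card A" "B \<subseteq> {..<(n::nat)}" "n < 2 * card B" "2 * f + 1 \<le> n"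
  shows "A \<inter> B \<noteq> {}"
proof
  assume disj: "A \<inter> B = {}"
  have fin: "finite A" "finite B" using assms finite_subset by blast+
  have "card (A \<union> B) = card A + card B" using disj fin card_Un_disjoint by blast
  moreover have "card (A \<union> B) \<le> n" using assms card_mono[of "{..<n}" "A \<union> B"] by auto
  ultimately show False using assms by linarith
qed

locale soda_run =
  fixes n f :: nat and enc :: "nat \<Rightarrow> 'v \<Rightarrow> 'c" and dec :: "(nat \<Rightarrow> 'c option) \<Rightarrow> 'v" and v0 :: 'v
    and st :: "nat \<Rightarrow> ('w::linorder, 'r, 'v, 'c) gst" and act :: "nat \<Rightarrow> ('w, 'r, 'v, 'c) action"
  assumes f_bound: "2 * f + 1 \<le> n"
    and exec: "soda_execution n f enc dec v0 st act"
begin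

lemma step_at: "step n f enc dec (st i) (act i) (st (Suc i))"
  using exec by (simp add: soda_execution_def)

lemma st_0: "st 0 = init_state n enc v0"
  using exec by (simp add: soda_execution_def)

lemma stag_mono: "i \<le> j \<Longrightarrow> stag (srv (st i) s) \<le> stag (srv (st j) s)"
  using lift_Suc_mono_le[of "\<lambda>i. stag (srv (st i) s)"] step_mono(1)[OF step_at] by blast

lemma wcnt_mono: "i \<le> j \<Longrightarrow> wcnt (wrs (st i) w) \<le> wcnt (wrs (st j) w)"
  using lift_Suc_mono_le[of "\<lambda>i. wcnt (wrs (st i) w)"] step_mono(2)[OF step_at] by blast

lemma rcnt_mono: "i \<le> j \<Longrightarrow> rcnt (rds (st i) r) \<le> rcnt (rds (st j) r)"
  using lift_Suc_mono_le[of "\<lambda>i. rcnt (rds (st i) r)"] step_mono(3)[OF step_at] by blast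

definition quorum :: "(nat \<Rightarrow> ('w, 'r, 'v, 'c) sst) \<Rightarrow> 'w tag \<Rightarrow> bool" where
  "quorum S T \<longleftrightarrow> n - f \<le> card {i. i < n \<and> T \<le> stag (S i)}"

text \<open>The following four predicates look at the whole execution st: they bound tags held before
  an operation was invoked (its counter was still below j), which is how real-time order enters.\<close>

definition quorum_le_before_read :: "'r readid \<Rightarrow> 'w tag \<Rightarrow> bool" where
  "quorum_le_before_read rid t \<longleftrightarrow>
     (\<forall>i0 T. rcnt (rds (st i0) (fst rid)) < snd rid \<longrightarrow> quorum (srv (st i0)) T \<longrightarrow> T \<le> t)"

definition quorum_less_before_write :: "'w \<Rightarrow> nat \<Rightarrow> 'w tag \<Rightarrow> bool" where
  "quorum_less_before_write w j t \<longleftrightarrow>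
     (\<forall>i0 T. wcnt (wrs (st i0) w) < j \<longrightarrow> quorum (srv (st i0)) T \<longrightarrow> T < t)"

definition stag_le_before_write :: "'w \<Rightarrow> nat \<Rightarrow> nat \<Rightarrow> 'w tag \<Rightarrow> bool" where
  "stag_le_before_write w j s t \<longleftrightarrow> (\<forall>i0. wcnt (wrs (st i0) w) < j \<longrightarrow> stag (srv (st i0) s) \<le> t)"

definition stag_le_before_read :: "'r \<Rightarrow> nat \<Rightarrow> nat \<Rightarrow> 'w tag \<Rightarrow> bool" where
  "stag_le_before_read r j s t \<longleftrightarrow> (\<forall>i0. rcnt (rds (st i0) r) < j \<longrightarrow> stag (srv (st i0) s) \<le> t)"

definition stored_code :: "('w \<Rightarrow> ('w, 'v) wst) \<Rightarrow> 'w tag \<Rightarrow> nat \<Rightarrow> 'c \<Rightarrow> bool" where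
  "stored_code W t i c \<longleftrightarrow> (t = T0 \<and> c = enc i v0) \<or> (\<exists>w j v. wlog (W w) j = Some (t, v) \<and> c = enc i v)"

definition msg_ok :: "(nat \<Rightarrow> ('w, 'r, 'v, 'c) sst) \<Rightarrow> ('w \<Rightarrow> ('w, 'v) wst) \<Rightarrow> ('r \<Rightarrow> ('w, 'v, 'c) rst)
   \<Rightarrow> ('w, 'r) proc \<Rightarrow> ('w, 'r) proc \<Rightarrow> ('w, 'r, 'v, 'c) msg \<Rightarrow> bool" where
  "msg_ok S W R p q m \<longleftrightarrow>
   (\<forall>i. p = PS i \<longrightarrow> i < n) \<and> (\<forall>i. q = PS i \<longrightarrow> i < n) \<and>
   (case m of
      TagQ j \<Rightarrow> (\<forall>w. p = PW w \<longrightarrow> j \<le> wcnt (W w)) \<and> (\<forall>r. p = PR r \<longrightarrow> j \<le> rcnt (R r))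
    | TagR j t \<Rightarrow> (\<forall>sv. p = PS sv \<longrightarrow> (\<forall>w. q = PW w \<longrightarrow> stag_le_before_write w j sv t) \<and>
                                     (\<forall>r. q = PR r \<longrightarrow> stag_le_before_read r j sv t))
    | MDFull t v \<Rightarrow> (\<exists>w j. wlog (W w) j = Some (t, v))
    | MDCoded t c \<Rightarrow> (\<forall>i. q = PS i \<longrightarrow> (\<exists>w j v. wlog (W w) j = Some (t, v) \<and> c = enc i v))
    | MDMeta mm \<Rightarrow> (\<forall>rid tr. mm = ReadValue rid tr \<longrightarrow> quorum_le_before_read rid tr)
    | Ack t \<Rightarrow> (\<forall>sv. p = PS sv \<longrightarrow> t \<le> stag (S sv))
    | ToReader rid t c \<Rightarrow> (\<forall>sv. p = PS sv \<longrightarrow> t \<le> stag (S sv) \<and> stored_code W t sv c) \<and>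
                          quorum_le_before_read rid t)"

definition server_ok :: "(nat \<Rightarrow> ('w, 'r, 'v, 'c) sst) \<Rightarrow> ('w \<Rightarrow> ('w, 'v) wst) \<Rightarrow> nat \<Rightarrow> bool" where
  "server_ok S W i \<longleftrightarrow> stored_code W (stag (S i)) i (sval (S i)) \<and>
     (\<forall>rid tr. (rid, tr) \<in> sRc (S i) \<longrightarrow> quorum_le_before_read rid tr)"

definition writer_ok :: "(nat \<Rightarrow> ('w, 'r, 'v, 'c) sst) \<Rightarrow> ('w, 'v) wst \<Rightarrow> 'w \<Rightarrow> bool" where
  "writer_ok S \<sigma> w \<longleftrightarrow>
   (\<forall>j t v. wlog \<sigma> j = Some (t, v) \<longrightarrow>
       (\<exists>z. t = Tag z w) \<and> 1 \<le> j \<and> j \<le> wcnt \<sigma> \<and> quorum_less_before_write w j t) \<and>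
   (\<forall>j v R. wph \<sigma> = WGet j v R \<longrightarrow> j = wcnt \<sigma> \<and> 1 \<le> j \<and> wlog \<sigma> j = None \<and> finite R \<and>
       (\<forall>sv t. (sv, t) \<in> R \<longrightarrow> sv < n \<and> stag_le_before_write w j sv t)) \<and>
   (\<forall>j tw A. wph \<sigma> = WPut j tw A \<longrightarrow> j = wcnt \<sigma> \<and> (\<exists>v. wlog \<sigma> j = Some (tw, v)) \<and>
       (\<forall>sv\<in>A. sv < n \<and> tw \<le> stag (S sv))) \<and>
   (\<forall>j. 1 \<le> j \<and> j \<le> wcnt \<sigma> \<and> (j < wcnt \<sigma> \<or> wph \<sigma> = WIdle) \<longrightarrow> j \<in> wdone \<sigma>) \<and>
   (\<forall>j\<in>wdone \<sigma>. \<exists>t v. wlog \<sigma> j = Some (t, v) \<and> quorum S t)"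

definition reader_ok :: "(nat \<Rightarrow> ('w, 'r, 'v, 'c) sst) \<Rightarrow> ('w \<Rightarrow> ('w, 'v) wst) \<Rightarrow> ('w, 'v, 'c) rst \<Rightarrow> 'r \<Rightarrow> bool" where
  "reader_ok S W \<sigma> r \<longleftrightarrow>
   (\<forall>j t v. rlog \<sigma> j = Some (t, v) \<longrightarrow> 1 \<le> j \<and> j \<le> rcnt \<sigma> \<and> quorum_le_before_read (r, j) t \<and> quorum S t \<and>
      (\<exists>X g. X \<subseteq> {..<n} \<and> card X = n - f \<and> (\<forall>x\<in>X. stored_code W t x (g x)) \<and>
          v = dec (\<lambda>x. if x \<in> X then Some (g x) else None))) \<and>
   (\<forall>j R. rph \<sigma> = RGet j R \<longrightarrow> j = rcnt \<sigma> \<and> 1 \<le> j \<and> rlog \<sigma> j = None \<and> finite R \<and>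
       (\<forall>sv t. (sv, t) \<in> R \<longrightarrow> sv < n \<and> stag_le_before_read r j sv t)) \<and>
   (\<forall>j tr P. rph \<sigma> = RData j tr P \<longrightarrow> j = rcnt \<sigma> \<and> 1 \<le> j \<and> rlog \<sigma> j = None \<and>
       (\<forall>sv t c. (sv, t, c) \<in> P \<longrightarrow> sv < n \<and> t \<le> stag (S sv) \<and> stored_code W t sv c \<and>
                                   quorum_le_before_read (r, j) t))"

definition soda_inv :: "('w, 'r, 'v, 'c) gst \<Rightarrow> bool" where
  "soda_inv s \<longleftrightarrow> (\<forall>p q m. (p, q, m) \<in># net s \<longrightarrow> msg_ok (srv s) (wrs s) (rds s) p q m) \<and>
     (\<forall>p q m. (q, m) \<in> set (outb s p) \<longrightarrow> msg_ok (srv s) (wrs s) (rds s) p q m) \<and>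
     (\<forall>i. server_ok (srv s) (wrs s) i) \<and> (\<forall>w. writer_ok (srv s) (wrs s w) w) \<and>
     (\<forall>r. reader_ok (srv s) (wrs s) (rds s r) r)"

definition grows :: "(nat \<Rightarrow> ('w, 'r, 'v, 'c) sst) \<Rightarrow> ('w \<Rightarrow> ('w, 'v) wst) \<Rightarrow> ('r \<Rightarrow> ('w, 'v, 'c) rst)
    \<Rightarrow> (nat \<Rightarrow> ('w, 'r, 'v, 'c) sst) \<Rightarrow> ('w \<Rightarrow> ('w, 'v) wst) \<Rightarrow> ('r \<Rightarrow> ('w, 'v, 'c) rst) \<Rightarrow> bool" where
  "grows S W R S' W' R' \<longleftrightarrow> (\<forall>i. stag (S i) \<le> stag (S' i)) \<and>
     (\<forall>w j x. wlog (W w) j = Some x \<longrightarrow> wlog (W' w) j = Some x) \<and>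
     (\<forall>w. wcnt (W w) \<le> wcnt (W' w)) \<and> (\<forall>r. rcnt (R r) \<le> rcnt (R' r))"

lemma quorum_grow: "quorum S T \<Longrightarrow> \<forall>i. stag (S i) \<le> stag (S' i) \<Longrightarrow> quorum S' T"
  unfolding quorum_def
proof -
  assume q: "n - f \<le> card {i. i < n \<and> T \<le> stag (S i)}" and m: "\<forall>i. stag (S i) \<le> stag (S' i)"
  have "{i. i < n \<and> T \<le> stag (S i)} \<subseteq> {i. i < n \<and> T \<le> stag (S' i)}"
    using m order_trans by blast
  then have "card {i. i < n \<and> T \<le> stag (S i)} \<le> card {i. i < n \<and> T \<le> stag (S' i)}"
    by (rule card_mono[rotated]) auto
  then show "n - f \<le> card {i. i < n \<and> T \<le> stag (S' i)}" using q by linarith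
qed

lemma quorum_of_subset:
  assumes "X \<subseteq> {i. i < n \<and> T \<le> stag (S i)}" "n - f \<le> card X"
  shows "quorum S T"
  using assms card_mono[of "{i. i < n \<and> T \<le> stag (S i)}" X] unfolding quorum_def by auto

lemma stored_code_grow: "stored_code W t i c \<Longrightarrow> grows S W R S' W' R' \<Longrightarrow> stored_code W' t i c"
  unfolding stored_code_def grows_def by blast

lemma quorum_le_before_read_mono: "quorum_le_before_read rid tr \<Longrightarrow> tr \<le> t \<Longrightarrow> quorum_le_before_read rid t"
  unfolding quorum_le_before_read_def using order_trans by blast

lemma msg_ok_grow:
  assumes p: "msg_ok S W R p q m" and g: "grows S W R S' W' R'"
  shows "msg_ok S' W' R' p q m"
proof -
  have g1: "\<And>i. stag (S i) \<le> stag (S' i)" and g2: "\<And>w j x. wlog (W w) j = Some x \<Longrightarrow> wlog (W' w) j = Some x"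
    and g3: "\<And>w. wcnt (W w) \<le> wcnt (W' w)" and g4: "\<And>r. rcnt (R r) \<le> rcnt (R' r)"
    using g unfolding grows_def by blast+
  have ok: "\<And>t i c. stored_code W t i c \<Longrightarrow> stored_code W' t i c" using stored_code_grow[OF _ g] by blast
  show ?thesis
  proof (cases m)
    case (TagQ j) then show ?thesis using p g3 g4 unfolding msg_ok_def by (auto intro: le_trans)
  next
    case (MDFull t v) then show ?thesis using p g2 unfolding msg_ok_def by (simp; metis)
  next
    case (MDCoded t c) then show ?thesis using p g2 unfolding msg_ok_def by (simp; metis)
  next
    case (Ack t) then show ?thesis using p g1 unfolding msg_ok_def by (auto intro: order_trans)
  next
    case (ToReader rid t c) then show ?thesis using p g1 ok unfolding msg_ok_def by (auto intro: order_trans)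
  qed (use p in \<open>auto simp: msg_ok_def\<close>)
qed

lemma server_ok_grow: "server_ok S W i \<Longrightarrow> grows S W R S' W' R' \<Longrightarrow> S' i = S i \<Longrightarrow> server_ok S' W' i"
  unfolding server_ok_def using stored_code_grow by metis

lemma writer_ok_grow:
  assumes ok: "writer_ok S \<sigma> w" and g: "grows S W R S' W' R'"
  shows "writer_ok S' \<sigma> w"
proof -
  have g1: "\<forall>i. stag (S i) \<le> stag (S' i)" using g unfolding grows_def by blast
  have q: "\<And>T. quorum S T \<Longrightarrow> quorum S' T" using quorum_grow g1 by blast
  have t: "\<And>tw sv. tw \<le> stag (S sv) \<Longrightarrow> tw \<le> stag (S' sv)" using g1 order_trans by blast
  show ?thesis using ok unfolding writer_ok_def
  proof (elim conjE, intro conjI)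
    assume "\<forall>j tw A. wph \<sigma> = WPut j tw A \<longrightarrow> j = wcnt \<sigma> \<and> (\<exists>v. wlog \<sigma> j = Some (tw, v)) \<and>
              (\<forall>sv\<in>A. sv < n \<and> tw \<le> stag (S sv))"
    then show "\<forall>j tw A. wph \<sigma> = WPut j tw A \<longrightarrow> j = wcnt \<sigma> \<and> (\<exists>v. wlog \<sigma> j = Some (tw, v)) \<and>
              (\<forall>sv\<in>A. sv < n \<and> tw \<le> stag (S' sv))"
      using t by blast
  next
    assume "\<forall>j\<in>wdone \<sigma>. \<exists>t v. wlog \<sigma> j = Some (t, v) \<and> quorum S t"
    then show "\<forall>j\<in>wdone \<sigma>. \<exists>t v. wlog \<sigma> j = Some (t, v) \<and> quorum S' t" using q by blast
  qed
qed

lemma reader_ok_grow: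
  assumes ok: "reader_ok S W \<sigma> r" and g: "grows S W R S' W' R'"
  shows "reader_ok S' W' \<sigma> r"
proof -
  have g1: "\<forall>i. stag (S i) \<le> stag (S' i)" using g unfolding grows_def by blast
  have q: "\<And>T. quorum S T \<Longrightarrow> quorum S' T" using quorum_grow g1 by blast
  have t: "\<And>tw sv. tw \<le> stag (S sv) \<Longrightarrow> tw \<le> stag (S' sv)" using g1 order_trans by blast
  have c: "\<And>t i c. stored_code W t i c \<Longrightarrow> stored_code W' t i c" using stored_code_grow[OF _ g] by blast
  show ?thesis using ok unfolding reader_ok_def
  proof (elim conjE, intro conjI)
    assume "\<forall>j t v. rlog \<sigma> j = Some (t, v) \<longrightarrow> 1 \<le> j \<and> j \<le> rcnt \<sigma> \<and>
              quorum_le_before_read (r, j) t \<and> quorum S t \<and>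
              (\<exists>X g. X \<subseteq> {..<n} \<and> card X = n - f \<and> (\<forall>x\<in>X. stored_code W t x (g x)) \<and>
                 v = dec (\<lambda>x. if x \<in> X then Some (g x) else None))"
    then show "\<forall>j t v. rlog \<sigma> j = Some (t, v) \<longrightarrow> 1 \<le> j \<and> j \<le> rcnt \<sigma> \<and>
              quorum_le_before_read (r, j) t \<and> quorum S' t \<and>
              (\<exists>X g. X \<subseteq> {..<n} \<and> card X = n - f \<and> (\<forall>x\<in>X. stored_code W' t x (g x)) \<and>
                 v = dec (\<lambda>x. if x \<in> X then Some (g x) else None))"
      using q c by meson
  next
    assume "\<forall>j tr P. rph \<sigma> = RData j tr P \<longrightarrow> j = rcnt \<sigma> \<and> 1 \<le> j \<and> rlog \<sigma> j = None \<and>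
              (\<forall>sv t c. (sv, t, c) \<in> P \<longrightarrow> sv < n \<and> t \<le> stag (S sv) \<and> stored_code W t sv c \<and>
                 quorum_le_before_read (r, j) t)"
    then show "\<forall>j tr P. rph \<sigma> = RData j tr P \<longrightarrow> j = rcnt \<sigma> \<and> 1 \<le> j \<and> rlog \<sigma> j = None \<and>
              (\<forall>sv t c. (sv, t, c) \<in> P \<longrightarrow> sv < n \<and> t \<le> stag (S' sv) \<and> stored_code W' t sv c \<and>
                 quorum_le_before_read (r, j) t)"
      using t c by meson
  qed
qed

text \<open>Only the components touched by a step have to be re-established; everything else carries
  over because tags, logs and counters only grow.\<close>
lemma soda_inv_update:
  assumes I: "soda_inv s"
    and g: "grows (srv s) (wrs s) (rds s) (srv s') (wrs s') (rds s')"
    and net: "\<And>p q m. (p, q, m) \<in># net s' \<Longrightarrow> (p, q, m) \<in># net s \<or> (q, m) \<in> set (outb s p)"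
    and out: "\<And>p q m. (q, m) \<in> set (outb s' p) \<Longrightarrow> (q, m) \<notin> set (outb s p) \<Longrightarrow>
                msg_ok (srv s') (wrs s') (rds s') p q m"
    and srv: "\<And>i. srv s' i \<noteq> srv s i \<Longrightarrow> server_ok (srv s') (wrs s') i"
    and wrs: "\<And>w. wrs s' w \<noteq> wrs s w \<Longrightarrow> writer_ok (srv s') (wrs s' w) w"
    and rds: "\<And>r. rds s' r \<noteq> rds s r \<Longrightarrow> reader_ok (srv s') (wrs s') (rds s' r) r"
  shows "soda_inv s'"
  unfolding soda_inv_def
proof (intro conjI allI impI)
  fix p q m assume "(p, q, m) \<in># net s'"
  then show "msg_ok (srv s') (wrs s') (rds s') p q m"
    using I net msg_ok_grow[OF _ g] unfolding soda_inv_def by blast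
next
  fix p q m assume "(q, m) \<in> set (outb s' p)"
  then show "msg_ok (srv s') (wrs s') (rds s') p q m"
    using I out msg_ok_grow[OF _ g] unfolding soda_inv_def by blast
next
  fix i show "server_ok (srv s') (wrs s') i"
    using I srv server_ok_grow[OF _ g] unfolding soda_inv_def by metis
next
  fix w show "writer_ok (srv s') (wrs s' w) w"
    using I wrs writer_ok_grow[OF _ g] unfolding soda_inv_def by metis
next
  fix r show "reader_ok (srv s') (wrs s') (rds s' r) r"
    using I rds reader_ok_grow[OF _ g] unfolding soda_inv_def by metis
qed

lemma soda_inv_init: "soda_inv (st 0)"
  by (simp add: st_0 soda_inv_def init_state_def server_ok_def stored_code_def writer_ok_def reader_ok_def)

lemma soda_inv_send:
  assumes I: "soda_inv s" and ne: "outb s p \<noteq> []"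
    and s': "s' = s\<lparr>net := net s + {# (p, fst (hd (outb s p)), snd (hd (outb s p))) #},
                outb := (outb s)(p := tl (outb s p))\<rparr>"
  shows "soda_inv s'"
proof (rule soda_inv_update[OF I])
  show "grows (srv s) (wrs s) (rds s) (srv s') (wrs s') (rds s')" unfolding grows_def s' by simp
  have "(fst (hd (outb s p)), snd (hd (outb s p))) \<in> set (outb s p)" using ne by simp
  then show "(p', q, m) \<in># net s \<or> (q, m) \<in> set (outb s p')" if "(p', q, m) \<in># net s'" for p' q m
    using that unfolding s' by auto
  show "msg_ok (srv s') (wrs s') (rds s') p' q m"
    if "(q, m) \<in> set (outb s' p')" "(q, m) \<notin> set (outb s p')" for p' q m
    using that ne list.set_sel(2)[of "outb s p"] unfolding s' by (auto split: if_splits)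
qed (simp_all add: s')

lemma soda_inv_crash:
  assumes I: "soda_inv s" and s': "s' = s\<lparr>crashed := X\<rparr>"
  shows "soda_inv s'"
  using I unfolding soda_inv_def s' by auto

lemma soda_inv_invoke_write:
  assumes I: "soda_inv s" and idle: "wph (wrs s w) = WIdle"
    and s': "s' = s\<lparr>wrs := (wrs s)(w := (wrs s w)\<lparr>wph := WGet (Suc (wcnt (wrs s w))) v {}, wcnt := Suc (wcnt (wrs s w))\<rparr>),
                 outb := (outb s)(PW w := outb s (PW w) @ map (\<lambda>i. (PS i, TagQ (Suc (wcnt (wrs s w))))) [0..<n])\<rparr>"
  shows "soda_inv s'"
proof (rule soda_inv_update[OF I])
  let ?\<sigma> = "wrs s w"
  have ok: "writer_ok (srv s) ?\<sigma> w" using I unfolding soda_inv_def by blast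
  have fresh: "wlog ?\<sigma> (Suc (wcnt ?\<sigma>)) = None"
    using ok unfolding writer_ok_def by (metis Suc_n_not_le_n not_None_eq surj_pair)
  show "writer_ok (srv s') (wrs s' w') w'" if "wrs s' w' \<noteq> wrs s w'" for w'
    using that ok fresh idle unfolding s' writer_ok_def by (auto simp: le_Suc_eq less_Suc_eq_le)
  show "msg_ok (srv s') (wrs s') (rds s') p q m"
    if "(q, m) \<in> set (outb s' p)" "(q, m) \<notin> set (outb s p)" for p q m
    using that unfolding s' msg_ok_def by (auto split: if_splits)
qed (auto simp: s' grows_def)

lemma soda_inv_invoke_read:
  assumes I: "soda_inv s" and idle: "rph (rds s r) = RIdle"
    and s': "s' = s\<lparr>rds := (rds s)(r := (rds s r)\<lparr>rph := RGet (Suc (rcnt (rds s r))) {}, rcnt := Suc (rcnt (rds s r))\<rparr>),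
                 outb := (outb s)(PR r := outb s (PR r) @ map (\<lambda>i. (PS i, TagQ (Suc (rcnt (rds s r))))) [0..<n])\<rparr>"
  shows "soda_inv s'"
proof (rule soda_inv_update[OF I])
  let ?\<sigma> = "rds s r"
  have ok: "reader_ok (srv s) (wrs s) ?\<sigma> r" using I unfolding soda_inv_def by blast
  have fresh: "rlog ?\<sigma> (Suc (rcnt ?\<sigma>)) = None"
    using ok unfolding reader_ok_def by (metis Suc_n_not_le_n not_None_eq surj_pair)
  show "reader_ok (srv s') (wrs s') (rds s' r') r'" if "rds s' r' \<noteq> rds s r'" for r'
    using that ok fresh unfolding s' reader_ok_def by (auto simp: le_Suc_eq)
  show "msg_ok (srv s') (wrs s') (rds s') p q m"
    if "(q, m) \<in> set (outb s' p)" "(q, m) \<notin> set (outb s p)" for p q m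
    using that unfolding s' msg_ok_def by (auto split: if_splits)
qed (auto simp: s' grows_def)

lemma stag_le_before_write_intro:
  assumes "j \<le> wcnt (wrs (st k) w)" "stag (srv (st k) i) \<le> t"
  shows "stag_le_before_write w j i t"
  unfolding stag_le_before_write_def
proof (intro allI impI)
  fix i0 assume "wcnt (wrs (st i0) w) < j"
  then have "i0 \<le> k" using assms(1) wcnt_mono[of k i0 w] by linarith
  then show "stag (srv (st i0) i) \<le> t" using stag_mono assms(2) order_trans by blast
qed

lemma stag_le_before_read_intro:
  assumes "j \<le> rcnt (rds (st k) r)" "stag (srv (st k) i) \<le> t"
  shows "stag_le_before_read r j i t"
  unfolding stag_le_before_read_def
proof (intro allI impI)
  fix i0 assume "rcnt (rds (st i0) r) < j"
  then have "i0 \<le> k" using assms(1) rcnt_mono[of k i0 r] by linarith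
  then show "stag (srv (st i0) i) \<le> t" using stag_mono assms(2) order_trans by blast
qed

lemma soda_inv_deliver_server:
  assumes I: "soda_inv (st k)" and pk: "(p, PS i, m) \<in># net (st k)"
    and sr: "srv_recv n f enc i p m (srv (st k) i) \<sigma>' os"
    and s': "s' = (st k)\<lparr>net := net (st k) - {# (p, PS i, m) #}, srv := (srv (st k))(i := \<sigma>'),
                outb := (outb (st k))(PS i := outb (st k) (PS i) @ os)\<rparr>"
  shows "soda_inv s'"
proof -
  define s where "s = st k"
  have P: "msg_ok (srv s) (wrs s) (rds s) p (PS i) m" using I pk unfolding soda_inv_def s_def by blast
  have fn: "f < n" using f_bound by linarith
  have pn: "\<forall>j. p = PS j \<longrightarrow> j < n" and iN: "i < n" using P unfolding msg_ok_def by auto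
  let ?G = "\<lambda>t c. stored_code (wrs s) t i c"
  let ?FV = "\<lambda>t v. \<exists>w j. wlog (wrs s w) j = Some (t, v)"
  have srv_ok: "server_ok (srv s) (wrs s) i" using I unfolding soda_inv_def s_def by blast
  have G0: "?G (stag (srv s i)) (sval (srv s i))"
    and reg: "\<forall>rid tr. (rid, tr) \<in> sRc (srv s i) \<longrightarrow> quorum_le_before_read rid tr"
    using srv_ok unfolding server_ok_def by blast+
  have GF: "\<forall>t v. m = MDFull t v \<longrightarrow> ?G t (enc i v) \<and> ?FV t v"
    using P unfolding msg_ok_def stored_code_def by (auto; blast)
  have GC: "\<forall>t c. m = MDCoded t c \<longrightarrow> ?G t c" using P unfolding msg_ok_def stored_code_def by auto
  have MQ: "\<forall>rid tr. m = MDMeta (ReadValue rid tr) \<longrightarrow> quorum_le_before_read rid tr"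
    using P unfolding msg_ok_def by auto
  have "stag (srv s i) \<le> stag \<sigma>' \<and> ?G (stag \<sigma>') (sval \<sigma>') \<and>
      (\<forall>rid tr. (rid, tr) \<in> sRc \<sigma>' \<longrightarrow> quorum_le_before_read rid tr) \<and>
      (\<forall>d m'. (d, m') \<in> set os \<longrightarrow> (\<forall>j. d = PS j \<longrightarrow> j < n) \<and>
         server_output_ok enc ?G ?FV quorum_le_before_read p m \<sigma>' d m')"
    using srv_recv_preserves[OF sr[folded s_def] fn pn G0 GF GC reg _ MQ] quorum_le_before_read_mono
    by blast
  then have mono: "stag (srv s i) \<le> stag \<sigma>'"
    and srv_ok': "server_ok (srv s') (wrs s') i"
    and out: "\<And>d m'. (d, m') \<in> set os \<Longrightarrow> (\<forall>j. d = PS j \<longrightarrow> j < n) \<and>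
         server_output_ok enc ?G ?FV quorum_le_before_read p m \<sigma>' d m'"
    unfolding server_ok_def s' s_def by auto
  have new: "msg_ok (srv s') (wrs s') (rds s') (PS i) d m'" if "(d, m') \<in> set os" for d m'
  proof (cases m')
    case (TagR j t)
    have reply: "m = TagQ j" "d = p" "t = stag \<sigma>'" using out[OF that] TagR unfolding server_output_ok_def by auto
    have "stag (srv (st k) i) \<le> t" using mono reply unfolding s_def by simp
    then have "(\<forall>w. p = PW w \<longrightarrow> stag_le_before_write w j i t) \<and> (\<forall>r. p = PR r \<longrightarrow> stag_le_before_read r j i t)"
      using P reply stag_le_before_write_intro stag_le_before_read_intro unfolding msg_ok_def s_def by auto
    then show ?thesis using TagR reply out[OF that] iN unfolding msg_ok_def by auto
  next
    case (MDCoded t c)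
    then show ?thesis using out[OF that] iN unfolding server_output_ok_def msg_ok_def s' s_def by (auto; blast)
  qed (use out[OF that] iN in \<open>auto simp: server_output_ok_def msg_ok_def s' s_def\<close>)
  show ?thesis
  proof (rule soda_inv_update[OF I[folded s_def]])
    show "grows (srv s) (wrs s) (rds s) (srv s') (wrs s') (rds s')"
      using mono unfolding grows_def s' s_def by auto
  qed (use new srv_ok' in \<open>auto simp: s' s_def dest: in_diffD split: if_splits\<close>)
qed

text \<open>This is why a get-tag phase works: its majority of replies meets every quorum.\<close>
lemma quorum_le_Max_replies:
  assumes fin: "finite R" and replies: "\<forall>sv t. (sv, t) \<in> R \<longrightarrow> sv < n \<and> stag (S sv) \<le> t"
    and maj: "n < 2 * card (fst ` R)" and q: "quorum S T"
  shows "T \<le> Max (snd ` R)"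
proof -
  have "{i. i < n \<and> T \<le> stag (S i)} \<inter> fst ` R \<noteq> {}"
    by (rule quorum_majority_inter[OF _ _ _ maj f_bound]) (use q replies in \<open>auto simp: quorum_def\<close>)
  then obtain sv t where reply: "(sv, t) \<in> R" "T \<le> stag (S sv)" by auto
  have "stag (S sv) \<le> t" using replies reply by blast
  moreover have "t \<le> Max (snd ` R)" using fin reply by (metis Max_ge finite_imageI image_eqI snd_conv)
  ultimately show ?thesis using reply order_trans by blast
qed

definition writer_update_ok :: "(nat \<Rightarrow> ('w, 'r, 'v, 'c) sst) \<Rightarrow> ('w, 'v) wst \<Rightarrow> ('w, 'v) wst \<Rightarrow> 'w
    \<Rightarrow> ('w, 'r, 'v, 'c) outs \<Rightarrow> bool" where
  "writer_update_ok S \<sigma> \<sigma>' w os \<longleftrightarrow> (\<forall>j x. wlog \<sigma> j = Some x \<longrightarrow> wlog \<sigma>' j = Some x) \<and> writer_ok S \<sigma>' w \<and>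
     (\<forall>d m'. (d, m') \<in> set os \<longrightarrow>
        (\<exists>j' t v. d = PS j' \<and> j' \<le> f \<and> m' = MDFull t v \<and> (\<exists>j. wlog \<sigma>' j = Some (t, v))))"

lemma writer_update_ok_idle: "writer_ok S \<sigma> w \<Longrightarrow> writer_update_ok S \<sigma> \<sigma> w []"
  unfolding writer_update_ok_def by simp

lemma writer_get_tag_reply:
  assumes wr: "wr_recv n f w (PS s0) (TagR j t) \<sigma> = (\<sigma>', os)" and ph: "wph \<sigma> = WGet j v R"
    and reply: "s0 < n" "stag_le_before_write w j s0 t" and ok: "writer_ok S \<sigma> w"
  shows "writer_update_ok S \<sigma> \<sigma>' w os"
proof -
  have W1: "\<And>j t v. wlog \<sigma> j = Some (t, v) \<Longrightarrow> (\<exists>z. t = Tag z w) \<and> 1 \<le> j \<and> j \<le> wcnt \<sigma>"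
    and w2: "j = wcnt \<sigma> \<and> 1 \<le> j \<and> wlog \<sigma> j = None \<and> finite R \<and>
       (\<forall>sv t. (sv, t) \<in> R \<longrightarrow> sv < n \<and> stag_le_before_write w j sv t)"
    and W4: "\<And>j. 1 \<le> j \<Longrightarrow> j \<le> wcnt \<sigma> \<Longrightarrow> (j < wcnt \<sigma> \<or> wph \<sigma> = WIdle) \<Longrightarrow> j \<in> wdone \<sigma>"
    and W5: "\<And>j. j \<in> wdone \<sigma> \<Longrightarrow> \<exists>t v. wlog \<sigma> j = Some (t, v) \<and> quorum S t"
    using ok ph unfolding writer_ok_def by blast+
  let ?R' = "insert (s0, t) R"
  show ?thesis
  proof (cases "n < 2 * card (fst ` ?R')")
    case maj: True
    define tw where "tw = Tag (Suc (tz (Max (snd ` ?R')))) w"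
    have eq: "\<sigma>' = \<sigma>\<lparr>wph := WPut j tw {}, wlog := (wlog \<sigma>)(j \<mapsto> (tw, v))\<rparr>" "os = md_value_send f tw v"
      using wr ph maj unfolding tw_def by (auto simp: Let_def)
    have new_tag: "quorum_less_before_write w j tw" unfolding quorum_less_before_write_def
    proof (intro allI impI)
      fix i0 T assume before: "wcnt (wrs (st i0) w) < j" and q: "quorum (srv (st i0)) T"
      have "\<forall>sv t'. (sv, t') \<in> ?R' \<longrightarrow> sv < n \<and> stag (srv (st i0) sv) \<le> t'"
        using w2 reply before unfolding stag_le_before_write_def by auto
      then have "T \<le> Max (snd ` ?R')" using quorum_le_Max_replies[OF _ _ maj q] w2 by blast
      then show "T < tw" unfolding tw_def by (rule less_Tag_Suc_tz)
    qed
    have "writer_ok S \<sigma>' w"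
      using ok new_tag w2 W4 ph unfolding writer_ok_def eq(1) by (auto simp: tw_def)
    then show ?thesis using w2 unfolding writer_update_ok_def eq
      by (auto simp: md_value_send_def less_Suc_eq_le)
  next
    case False
    have eq: "\<sigma>' = \<sigma>\<lparr>wph := WGet j v ?R'\<rparr>" "os = []"
      using wr ph False by (auto simp: Let_def)
    have "writer_ok S \<sigma>' w"
      using ok w2 reply ph unfolding writer_ok_def eq(1) by auto
    then show ?thesis unfolding writer_update_ok_def eq by auto
  qed
qed

lemma writer_ack:
  assumes wr: "wr_recv n f w (PS s0) (Ack t) \<sigma> = (\<sigma>', os)" and ph: "wph \<sigma> = WPut j t A"
    and ack: "s0 < n" "t \<le> stag (S s0)" and ok: "writer_ok S \<sigma> w"
  shows "writer_update_ok S \<sigma> \<sigma>' w os"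
proof -
  have w3: "j = wcnt \<sigma> \<and> (\<exists>v. wlog \<sigma> j = Some (t, v)) \<and> (\<forall>sv\<in>A. sv < n \<and> t \<le> stag (S sv))"
    using ok ph unfolding writer_ok_def by blast
  let ?A' = "insert s0 A"
  have acked: "?A' \<subseteq> {i. i < n \<and> t \<le> stag (S i)}" using w3 ack by auto
  show ?thesis
  proof (cases "n - f \<le> card ?A'")
    case True
    have eq: "\<sigma>' = \<sigma>\<lparr>wph := WIdle, wdone := insert j (wdone \<sigma>)\<rparr>" "os = []"
      using wr ph True by (auto simp: Let_def)
    have "quorum S t" using quorum_of_subset[OF acked True] .
    then have "writer_ok S \<sigma>' w"
      using ok ph w3 unfolding writer_ok_def eq(1) by (auto simp: le_less)
    then show ?thesis unfolding writer_update_ok_def eq by auto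
  next
    case False
    have eq: "\<sigma>' = \<sigma>\<lparr>wph := WPut j t ?A'\<rparr>" "os = []"
      using wr ph False by (auto simp: Let_def)
    have "writer_ok S \<sigma>' w"
      using ok ph w3 ack unfolding writer_ok_def eq(1) by auto
    then show ?thesis unfolding writer_update_ok_def eq by auto
  qed
qed

lemma wr_recv_preserves:
  assumes wr: "wr_recv n f w p m \<sigma> = (\<sigma>', os)"
    and P: "msg_ok S W R p (PW w) m" and ok: "writer_ok S \<sigma> w"
  shows "writer_update_ok S \<sigma> \<sigma>' w os"
proof -
  consider (reply) s0 j t v Rs where "p = PS s0" "m = TagR j t" "wph \<sigma> = WGet j v Rs"
    | (ack) s0 j t A where "p = PS s0" "m = Ack t" "wph \<sigma> = WPut j t A"
    | (ignored) "\<sigma>' = \<sigma>" "os = []"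
    using wr by (cases "(n, f, w, p, m, \<sigma>)" rule: wr_recv.cases) (auto split: wphase.splits if_splits)
  then show ?thesis
  proof cases
    case reply
    then show ?thesis using writer_get_tag_reply wr P ok unfolding msg_ok_def by auto
  next
    case ack
    then show ?thesis using writer_ack wr P ok unfolding msg_ok_def by auto
  qed (use ok writer_update_ok_idle in simp)
qed

definition reader_update_ok :: "(nat \<Rightarrow> ('w, 'r, 'v, 'c) sst) \<Rightarrow> ('w \<Rightarrow> ('w, 'v) wst) \<Rightarrow> ('w, 'v, 'c) rst
    \<Rightarrow> ('w, 'v, 'c) rst \<Rightarrow> 'r \<Rightarrow> ('w, 'r, 'v, 'c) outs \<Rightarrow> bool" where
  "reader_update_ok S W \<sigma> \<sigma>' r os \<longleftrightarrow> (\<forall>j x. rlog \<sigma> j = Some x \<longrightarrow> rlog \<sigma>' j = Some x) \<and> reader_ok S W \<sigma>' r \<and>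
     (\<forall>d m'. (d, m') \<in> set os \<longrightarrow> (\<exists>j' mm. d = PS j' \<and> j' \<le> f \<and> m' = MDMeta mm \<and>
        (\<forall>rid tr. mm = ReadValue rid tr \<longrightarrow> quorum_le_before_read rid tr)))"

lemma reader_get_tag_reply:
  assumes rd: "rd_recv n f dec r (PS s0) (TagR j t) \<sigma> \<sigma>' os" and ph: "rph \<sigma> = RGet j R"
    and reply: "s0 < n" "stag_le_before_read r j s0 t" and ok: "reader_ok S W \<sigma> r"
  shows "reader_update_ok S W \<sigma> \<sigma>' r os"
proof -
  have r2: "j = rcnt \<sigma> \<and> 1 \<le> j \<and> rlog \<sigma> j = None \<and> finite R \<and>
       (\<forall>sv t. (sv, t) \<in> R \<longrightarrow> sv < n \<and> stag_le_before_read r j sv t)"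
    using ok ph unfolding reader_ok_def by blast
  let ?R' = "insert (s0, t) R"
  show ?thesis
  proof (cases "n < 2 * card (fst ` ?R')")
    case maj: True
    define tr where "tr = Max (snd ` ?R')"
    have eq: "\<sigma>' = \<sigma>\<lparr>rph := RData j tr {}\<rparr>" "os = md_meta_send f (ReadValue (r, j) tr)"
      using rd ph maj unfolding tr_def by (auto simp: rd_recv_def Let_def)
    have bound: "quorum_le_before_read (r, j) tr" unfolding quorum_le_before_read_def
    proof (intro allI impI)
      fix i0 T assume before: "rcnt (rds (st i0) (fst (r, j))) < snd (r, j)" and q: "quorum (srv (st i0)) T"
      have "\<forall>sv t'. (sv, t') \<in> ?R' \<longrightarrow> sv < n \<and> stag (srv (st i0) sv) \<le> t'"
        using r2 reply before unfolding stag_le_before_read_def by auto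
      then show "T \<le> tr" using quorum_le_Max_replies[OF _ _ maj q] r2 unfolding tr_def by blast
    qed
    have "reader_ok S W \<sigma>' r" using ok r2 unfolding reader_ok_def eq(1) by auto
    then show ?thesis using bound in_set_md_meta_send unfolding reader_update_ok_def eq by fastforce
  next
    case False
    have eq: "\<sigma>' = \<sigma>\<lparr>rph := RGet j ?R'\<rparr>" "os = []"
      using rd ph False by (auto simp: rd_recv_def Let_def)
    have "reader_ok S W \<sigma>' r" using ok r2 reply unfolding reader_ok_def eq(1) by auto
    then show ?thesis unfolding reader_update_ok_def eq by auto
  qed
qed

lemma reader_data_reply:
  assumes rd: "rd_recv n f dec r (PS s0) (ToReader (r, j) t c) \<sigma> \<sigma>' os" and ph: "rph \<sigma> = RData j tr P"
    and reply: "s0 < n" "t \<le> stag (S s0)" "stored_code W t s0 c" "quorum_le_before_read (r, j) t"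
    and ok: "reader_ok S W \<sigma> r"
  shows "reader_update_ok S W \<sigma> \<sigma>' r os"
proof -
  have r3: "j = rcnt \<sigma> \<and> 1 \<le> j \<and> rlog \<sigma> j = None \<and>
       (\<forall>sv t c. (sv, t, c) \<in> P \<longrightarrow> sv < n \<and> t \<le> stag (S sv) \<and> stored_code W t sv c \<and>
                                   quorum_le_before_read (r, j) t)"
    using ok ph unfolding reader_ok_def by blast
  let ?P' = "insert (s0, t, c) P"
  have elements: "\<forall>sv t' c'. (sv, t', c') \<in> ?P' \<longrightarrow> sv < n \<and> t' \<le> stag (S sv) \<and> stored_code W t' sv c' \<and>
                      quorum_le_before_read (r, j) t'"
    using r3 reply by auto
  show ?thesis
  proof (cases "n - f \<le> card {s'. \<exists>c'. (s', t, c') \<in> ?P'}")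
    case True
    obtain X g where X: "X \<subseteq> {s'. (s', t, g s') \<in> ?P'}" "card X = n - f"
      and eq: "\<sigma>' = \<sigma>\<lparr>rph := RIdle, rlog := (rlog \<sigma>)(j \<mapsto> (t, dec (\<lambda>x. if x \<in> X then Some (g x) else None)))\<rparr>"
              "os = md_meta_send f (ReadComplete (r, j) tr)"
      using rd ph True by (auto simp: rd_recv_def Let_def)
    have X_holds: "X \<subseteq> {i. i < n \<and> t \<le> stag (S i)}" using X elements by auto
    have X_codes: "X \<subseteq> {..<n}" "\<forall>x\<in>X. stored_code W t x (g x)" using X elements by auto
    have "X \<noteq> {}" using X(2) f_bound by auto
    then have "quorum_le_before_read (r, j) t" using X elements by blast
    moreover have "quorum S t" using quorum_of_subset[OF X_holds] X(2) by simp
    ultimately have "reader_ok S W \<sigma>' r"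
      using ok r3 X_codes X(2) unfolding reader_ok_def eq(1) by auto
    then show ?thesis using r3 in_set_md_meta_send unfolding reader_update_ok_def eq by fastforce
  next
    case False
    have eq: "\<sigma>' = \<sigma>\<lparr>rph := RData j tr ?P'\<rparr>" "os = []"
      using rd ph False by (auto simp: rd_recv_def Let_def)
    have "reader_ok S W \<sigma>' r" using ok r3 elements unfolding reader_ok_def eq(1) by auto
    then show ?thesis unfolding reader_update_ok_def eq by auto
  qed
qed

lemma rd_recv_preserves:
  assumes rd: "rd_recv n f dec r p m \<sigma> \<sigma>' os"
    and P: "msg_ok S W R p (PR r) m" and ok: "reader_ok S W \<sigma> r"
  shows "reader_update_ok S W \<sigma> \<sigma>' r os"
proof -
  consider (reply) s0 j t Rs where "p = PS s0" "m = TagR j t" "rph \<sigma> = RGet j Rs"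
    | (data) s0 j t c tr Ps where "p = PS s0" "m = ToReader (r, j) t c" "rph \<sigma> = RData j tr Ps"
    | (ignored) "\<sigma>' = \<sigma>" "os = []"
    using rd unfolding rd_recv_def by (auto split: proc.splits msg.splits rphase.splits if_splits)
  then show ?thesis
  proof cases
    case reply
    then show ?thesis using reader_get_tag_reply rd P ok unfolding msg_ok_def by auto
  next
    case data
    then show ?thesis using reader_data_reply rd P ok unfolding msg_ok_def by auto
  qed (use ok in \<open>simp add: reader_update_ok_def\<close>)
qed

lemma soda_inv_deliver_writer:
  assumes I: "soda_inv s" and upd: "writer_update_ok (srv s) (wrs s w) \<sigma>' w os"
    and cnt: "wcnt \<sigma>' = wcnt (wrs s w)"
    and s': "s' = s\<lparr>net := net s - {# (p, PW w, m) #}, wrs := (wrs s)(w := \<sigma>'),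
                outb := (outb s)(PW w := outb s (PW w) @ os)\<rparr>"
  shows "soda_inv s'"
proof (rule soda_inv_update[OF I])
  show "grows (srv s) (wrs s) (rds s) (srv s') (wrs s') (rds s')"
    using upd cnt unfolding grows_def writer_update_ok_def s' by auto
  show "msg_ok (srv s') (wrs s') (rds s') p' q m'"
    if "(q, m') \<in> set (outb s' p')" "(q, m') \<notin> set (outb s p')" for p' q m'
    using that upd f_bound unfolding writer_update_ok_def msg_ok_def s'
    by (fastforce split: if_splits)
qed (use upd in \<open>auto simp: s' writer_update_ok_def dest: in_diffD\<close>)

lemma soda_inv_deliver_reader:
  assumes I: "soda_inv s" and upd: "reader_update_ok (srv s) (wrs s) (rds s r) \<sigma>' r os"
    and cnt: "rcnt \<sigma>' = rcnt (rds s r)"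
    and s': "s' = s\<lparr>net := net s - {# (p, PR r, m) #}, rds := (rds s)(r := \<sigma>'),
                outb := (outb s)(PR r := outb s (PR r) @ os)\<rparr>"
  shows "soda_inv s'"
proof (rule soda_inv_update[OF I])
  show "grows (srv s) (wrs s) (rds s) (srv s') (wrs s') (rds s')"
    using cnt unfolding grows_def s' by auto
  show "msg_ok (srv s') (wrs s') (rds s') p' q m'"
    if "(q, m') \<in> set (outb s' p')" "(q, m') \<notin> set (outb s p')" for p' q m'
    using that upd f_bound unfolding reader_update_ok_def msg_ok_def s'
    by (fastforce split: if_splits)
qed (use upd in \<open>auto simp: s' reader_update_ok_def dest: in_diffD\<close>)

definition logs_extend :: "('w, 'r, 'v, 'c) gst \<Rightarrow> ('w, 'r, 'v, 'c) gst \<Rightarrow> bool" where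
  "logs_extend s s' \<longleftrightarrow> (\<forall>w j x. wlog (wrs s w) j = Some x \<longrightarrow> wlog (wrs s' w) j = Some x) \<and>
                         (\<forall>r j x. rlog (rds s r) j = Some x \<longrightarrow> rlog (rds s' r) j = Some x)"

lemma soda_inv_step:
  assumes I: "soda_inv (st k)"
  shows "soda_inv (st (Suc k)) \<and> logs_extend (st k) (st (Suc k))"
  using step_at[of k]
proof (cases rule: step_cases)
  case (Send p) then show ?thesis using soda_inv_send[OF I] by (simp add: logs_extend_def)
next
  case (Crash p) then show ?thesis using soda_inv_crash[OF I] by (simp add: logs_extend_def)
next
  case (InvokeW w v) then show ?thesis using soda_inv_invoke_write[OF I] by (simp add: logs_extend_def)
next
  case (InvokeR r) then show ?thesis using soda_inv_invoke_read[OF I] by (simp add: logs_extend_def)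
next
  case (DeliverS p i m \<sigma>' os)
  then show ?thesis using soda_inv_deliver_server[OF I] by (simp add: logs_extend_def)
next
  case (DeliverW p w m \<sigma>' os)
  have "writer_update_ok (srv (st k)) (wrs (st k) w) \<sigma>' w os"
    using wr_recv_preserves[OF DeliverW(2)] I DeliverW(1) unfolding soda_inv_def by blast
  then show ?thesis using soda_inv_deliver_writer[OF I _ wr_recv_wcnt[OF DeliverW(2)] DeliverW(3)] DeliverW(3)
    unfolding writer_update_ok_def logs_extend_def by simp
next
  case (DeliverR p r m \<sigma>' os)
  have "reader_update_ok (srv (st k)) (wrs (st k)) (rds (st k) r) \<sigma>' r os"
    using rd_recv_preserves[OF DeliverR(2)] I DeliverR(1) unfolding soda_inv_def by blast
  then show ?thesis using soda_inv_deliver_reader[OF I _ rd_recv_rcnt[OF DeliverR(2)] DeliverR(3)] DeliverR(3)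
    unfolding reader_update_ok_def logs_extend_def by simp
qed (use I in \<open>simp add: logs_extend_def\<close>)

lemma soda_inv_holds: "soda_inv (st k)"
  by (induction k) (use soda_inv_init soda_inv_step in auto)

lemma logs_extend_mono: "k \<le> k' \<Longrightarrow> logs_extend (st k) (st k')"
proof (induction k' rule: dec_induct)
  case base then show ?case by (simp add: logs_extend_def)
next
  case (step k') then show ?case using soda_inv_step[OF soda_inv_holds[of k']] unfolding logs_extend_def by blast
qed

lemma wlog_persists: "wlog (wrs (st k) w) j = Some x \<Longrightarrow> k \<le> k' \<Longrightarrow> wlog (wrs (st k') w) j = Some x"
  using logs_extend_mono unfolding logs_extend_def by blast

lemma rlog_persists: "rlog (rds (st k) r) j = Some x \<Longrightarrow> k \<le> k' \<Longrightarrow> rlog (rds (st k') r) j = Some x"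
  using logs_extend_mono unfolding logs_extend_def by blast

lemma oplog_persists: "oplog (st k) \<pi> = Some x \<Longrightarrow> k \<le> k' \<Longrightarrow> oplog (st k') \<pi> = Some x"
  by (cases \<pi>) (auto dest: wlog_persists rlog_persists)

lemma oplog_unique: "oplog (st k) \<pi> = Some x \<Longrightarrow> oplog (st k') \<pi> = Some y \<Longrightarrow> x = y"
  using oplog_persists[of k \<pi> x "max k k'"] oplog_persists[of k' \<pi> y "max k k'"] by simp

lemma optv_eq_oplog: "oplog (st k) \<pi> = Some x \<Longrightarrow> optv st \<pi> = x"
proof -
  assume a: "oplog (st k) \<pi> = Some x"
  let ?i = "SOME i. oplog (st i) \<pi> \<noteq> None"
  have "oplog (st ?i) \<pi> \<noteq> None" using a by (metis (mono_tags, lifting) option.discI someI)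
  then obtain y where y: "oplog (st ?i) \<pi> = Some y" by blast
  then have "x = y" using oplog_unique[OF a] by blast
  then show ?thesis unfolding optv_def using y by simp
qed

lemma writer_ok_at: "writer_ok (srv (st k)) (wrs (st k) w) w"
  using soda_inv_holds[of k] unfolding soda_inv_def by blast

lemma reader_ok_at: "reader_ok (srv (st k)) (wrs (st k)) (rds (st k) r) r"
  using soda_inv_holds[of k] unfolding soda_inv_def by blast

lemma wlog_entry:
  "wlog (wrs (st k) w) j = Some (t, v) \<Longrightarrow>
     (\<exists>z. t = Tag z w) \<and> 1 \<le> j \<and> j \<le> wcnt (wrs (st k) w) \<and> quorum_less_before_write w j t"
  using writer_ok_at[of k w] unfolding writer_ok_def by blast

lemma wcnt_step:
  assumes "wcnt (wrs (st (Suc i)) w) \<noteq> wcnt (wrs (st i) w)"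
  shows "wph (wrs (st i) w) = WIdle \<and> wcnt (wrs (st (Suc i)) w) = Suc (wcnt (wrs (st i) w))"
  using step_at[of i]
proof (cases rule: step_cases)
  case (InvokeW w' v) then show ?thesis using assms by (cases "w' = w") auto
next
  case (DeliverW p w' m \<sigma>' os) then show ?thesis using assms wr_recv_wcnt by (cases "w' = w") fastforce+
qed (use assms in auto)

lemma write_invoked_when_idle:
  "1 \<le> j \<Longrightarrow> j \<le> wcnt (wrs (st k) w) \<Longrightarrow> \<exists>i. wcnt (wrs (st i) w) = j - 1 \<and> wph (wrs (st i) w) = WIdle"
proof (induction k)
  case 0 then show ?case by (simp add: st_0 init_state_def)
next
  case (Suc k)
  show ?case
  proof (cases "j \<le> wcnt (wrs (st k) w)")
    case True then show ?thesis using Suc by blast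
  next
    case False
    then have "wcnt (wrs (st (Suc k)) w) \<noteq> wcnt (wrs (st k) w)" using Suc by linarith
    then have "wph (wrs (st k) w) = WIdle \<and> wcnt (wrs (st (Suc k)) w) = Suc (wcnt (wrs (st k) w))"
      by (rule wcnt_step)
    then show ?thesis using False Suc by (intro exI[of _ k]) auto
  qed
qed

text \<open>Write j is complete, so its tag is held by a quorum, before write j' is invoked.\<close>
lemma wlog_tag_less:
  assumes a: "wlog (wrs (st k) w) j = Some (t, v)" and b: "wlog (wrs (st k') w) j' = Some (t', v')"
    and "j < j'"
  shows "t < t'"
proof -
  have b': "1 \<le> j' \<and> j' \<le> wcnt (wrs (st k') w) \<and> quorum_less_before_write w j' t'"
    using wlog_entry[OF b] by blast
  obtain i where i: "wcnt (wrs (st i) w) = j' - 1" "wph (wrs (st i) w) = WIdle"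
    using write_invoked_when_idle b' by blast
  have "j \<in> wdone (wrs (st i) w)"
    using writer_ok_at[of i w] i wlog_entry[OF a] \<open>j < j'\<close> unfolding writer_ok_def by auto
  then obtain t1 v1 where t1: "wlog (wrs (st i) w) j = Some (t1, v1)" "quorum (srv (st i)) t1"
    using writer_ok_at[of i w] unfolding writer_ok_def by blast
  have "t1 = t" using oplog_unique[of i "OpW w j" "(t1, v1)" k "(t, v)"] t1 a by simp
  moreover have "wcnt (wrs (st i) w) < j'" using i \<open>j < j'\<close> by linarith
  ultimately show "t < t'" using b' t1 unfolding quorum_less_before_write_def by auto
qed

lemma wlog_tag_inj:
  assumes a: "wlog (wrs (st k) w) j = Some (t, v)" and b: "wlog (wrs (st k') w') j' = Some (t, v')"
  shows "w = w' \<and> j = j'"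
proof -
  have "w = w'" using wlog_entry[OF a] wlog_entry[OF b] by auto
  moreover have "j = j'"
  proof (rule ccontr)
    assume "j \<noteq> j'"
    then have "t < t"
      using wlog_tag_less[OF a b[folded calculation]] wlog_tag_less[OF b[folded calculation] a]
      by (cases "j < j'") auto
    then show False by simp
  qed
  ultimately show ?thesis by blast
qed

lemma completed_at_quorum:
  assumes "completed_at st \<pi> i"
  shows "\<exists>x. oplog (st (Suc i)) \<pi> = Some x \<and> quorum (srv (st (Suc i))) (fst x)"
proof (cases \<pi>)
  case (OpW w j)
  then have "j \<in> wdone (wrs (st (Suc i)) w)" using assms by simp
  then show ?thesis using writer_ok_at[of "Suc i" w] OpW unfolding writer_ok_def by fastforce
next
  case (OpR r j)
  then obtain t v where "rlog (rds (st (Suc i)) r) j = Some (t, v)" using assms by fastforce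
  then show ?thesis using reader_ok_at[of "Suc i" r] OpR unfolding reader_ok_def by fastforce
qed

lemma no_real_time_inversion: "\<not> (precedes st \<pi>1 \<pi>2 \<and> tag_order st \<pi>2 \<pi>1)"
proof
  assume a: "precedes st \<pi>1 \<pi>2 \<and> tag_order st \<pi>2 \<pi>1"
  then obtain i1 i2 where c: "completed_at st \<pi>1 i1" and iv: "invoked_at st \<pi>2 i2" and lt: "i1 < i2"
    unfolding precedes_def by blast
  obtain x where x: "oplog (st (Suc i1)) \<pi>1 = Some x" "quorum (srv (st (Suc i1))) (fst x)"
    using completed_at_quorum[OF c] by blast
  have t1: "optag st \<pi>1 = fst x" using optv_eq_oplog[OF x(1)] unfolding optag_def by simp
  have q: "quorum (srv (st i2)) (fst x)"
    using quorum_grow[OF x(2)] stag_mono lt by (simp add: Suc_leI)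
  have to: "in_Pi st \<pi>2" "optag st \<pi>2 < optag st \<pi>1 \<or> (optag st \<pi>2 = optag st \<pi>1 \<and> is_write \<pi>2 \<and> is_read \<pi>1)"
    using a unfolding tag_order_def by blast+
  obtain k2 y where y: "oplog (st k2) \<pi>2 = Some y" using to(1) unfolding in_Pi_def by blast
  have t2: "optag st \<pi>2 = fst y" using optv_eq_oplog[OF y] unfolding optag_def by simp
  show False
  proof (cases \<pi>2)
    case (OpW w j)
    have "wcnt (wrs (st i2) w) < j" using iv OpW unfolding invoked_at_def by simp
    moreover obtain t v where "y = (t, v)" by (cases y)
    ultimately have "fst x < fst y" using wlog_entry[of k2 w j] y OpW q unfolding quorum_less_before_write_def by auto
    then show ?thesis using to t1 t2 by auto
  next
    case (OpR r j)
    have "rcnt (rds (st i2) r) < j" using iv OpR unfolding invoked_at_def by simp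
    moreover obtain t v where "y = (t, v)" by (cases y)
    ultimately have "fst x \<le> fst y" using reader_ok_at[of k2 r] y OpR q unfolding reader_ok_def quorum_le_before_read_def by fastforce
    then show ?thesis using to t1 t2 OpR by auto
  qed
qed

lemma optag_write:
  assumes "in_Pi st (OpW w j)"
  shows "\<exists>k z. wlog (wrs (st k) w) j = Some (Tag z w, opval st (OpW w j)) \<and> optag st (OpW w j) = Tag z w"
proof -
  obtain k x where x: "oplog (st k) (OpW w j) = Some x" using assms unfolding in_Pi_def by blast
  obtain t v where tv: "x = (t, v)" by (cases x)
  obtain z where "t = Tag z w" using wlog_entry[of k w j t v] x tv by auto
  then show ?thesis using x tv optv_eq_oplog[OF x] unfolding optag_def opval_def by auto
qed

lemma optag_write_inj:
  assumes "in_Pi st (OpW w j)" "in_Pi st (OpW w' j')" "optag st (OpW w j) = optag st (OpW w' j')"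
  shows "OpW w j = OpW w' j'"
proof -
  obtain k z where a: "wlog (wrs (st k) w) j = Some (Tag z w, opval st (OpW w j))" "optag st (OpW w j) = Tag z w"
    using optag_write assms(1) by blast
  obtain k' z' where b: "wlog (wrs (st k') w') j' = Some (Tag z' w', opval st (OpW w' j'))"
      "optag st (OpW w' j') = Tag z' w'"
    using optag_write assms(2) by blast
  show ?thesis using wlog_tag_inj[OF a(1)] b assms(3) a(2) by auto
qed

lemma tag_order_total_write:
  assumes "in_Pi st \<pi>1" "in_Pi st \<pi>2" "is_write \<pi>1" "\<pi>2 \<noteq> \<pi>1"
  shows "tag_order st \<pi>1 \<pi>2 \<or> tag_order st \<pi>2 \<pi>1"
proof (cases "optag st \<pi>1 = optag st \<pi>2")
  case True
  obtain w j where p1: "\<pi>1 = OpW w j" using assms(3) by (cases \<pi>1) auto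
  have "is_read \<pi>2"
  proof (cases \<pi>2)
    case (OpW w' j')
    then show ?thesis using optag_write_inj[of w j w' j'] assms True p1 by auto
  qed simp
  then show ?thesis using assms True unfolding tag_order_def by auto
qed (use assms in \<open>auto simp: tag_order_def\<close>)

text \<open>All n - f coded elements a read decodes carry tag t_read; as a tag determines the write
  (or the initial value), they are the codewords of one value, which decoding recovers.\<close>
lemma rlog_decodes:
  assumes MDS: "\<forall>v S. S \<subseteq> {..<n} \<and> card S = n - f \<longrightarrow>
                dec (\<lambda>x. if x \<in> S then Some (enc x v) else None) = v"
    and rl: "rlog (rds (st k) r) j = Some (t, v)"
  shows "(t = T0 \<and> v = v0) \<or> (\<exists>w i. wlog (wrs (st k) w) i = Some (t, v))"
proof -
  obtain X g where X: "X \<subseteq> {..<n}" "card X = n - f" "\<forall>x\<in>X. stored_code (wrs (st k)) t x (g x)"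
    and v: "v = dec (\<lambda>x. if x \<in> X then Some (g x) else None)"
    using reader_ok_at[of k r] rl unfolding reader_ok_def by blast
  have decode: "v = u" if "\<forall>x\<in>X. g x = enc x u" for u
  proof -
    have "(\<lambda>x. if x \<in> X then Some (g x) else None) = (\<lambda>x. if x \<in> X then Some (enc x u) else None)"
      using that by auto
    then show ?thesis using X v MDS by metis
  qed
  obtain x0 where "x0 \<in> X" using X(2) f_bound by fastforce
  show ?thesis
  proof (cases "t = T0")
    case True
    have "\<forall>x\<in>X. g x = enc x v0"
      using X(3) True wlog_entry unfolding stored_code_def by fastforce
    then show ?thesis using True decode by blast
  next
    case False
    obtain w1 j1 v1 where w1: "wlog (wrs (st k) w1) j1 = Some (t, v1)"
      using X(3) \<open>x0 \<in> X\<close> False unfolding stored_code_def by blast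
    have "\<forall>x\<in>X. g x = enc x v1"
    proof
      fix x assume "x \<in> X"
      then obtain w2 j2 v2 where e: "wlog (wrs (st k) w2) j2 = Some (t, v2)" and gx: "g x = enc x v2"
        using X(3) False unfolding stored_code_def by blast
      have "w2 = w1 \<and> j2 = j1" using wlog_tag_inj[OF e w1] .
      then show "g x = enc x v1" using e w1 gx by simp
    qed
    then show ?thesis using decode w1 by blast
  qed
qed

lemma read_returns_last_write:
  assumes MDS: "\<forall>v S. S \<subseteq> {..<n} \<and> card S = n - f \<longrightarrow>
                dec (\<lambda>x. if x \<in> S then Some (enc x v) else None) = v"
    and rho: "in_Pi st \<rho>" "is_read \<rho>"
  shows "((\<nexists>\<pi>. is_write \<pi> \<and> tag_order st \<pi> \<rho>) \<longrightarrow> opval st \<rho> = v0) \<and>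
          ((\<exists>\<pi>. is_write \<pi> \<and> tag_order st \<pi> \<rho>) \<longrightarrow>
             (\<exists>\<pi>. is_write \<pi> \<and> tag_order st \<pi> \<rho> \<and>
                 (\<forall>\<pi>'. is_write \<pi>' \<and> tag_order st \<pi>' \<rho> \<longrightarrow> \<pi>' = \<pi> \<or> tag_order st \<pi>' \<pi>) \<and>
                 opval st \<rho> = opval st \<pi>))"
proof -
  obtain r j where rj: "\<rho> = OpR r j" using rho(2) by (cases \<rho>) auto
  obtain k t v where rl: "rlog (rds (st k) r) j = Some (t, v)"
    using rho(1) rj unfolding in_Pi_def by fastforce
  have ov: "optag st \<rho> = t" "opval st \<rho> = v"
    using optv_eq_oplog[of k \<rho>] rl rj unfolding optag_def opval_def by auto
  consider "t = T0" "v = v0" | w1 j1 where "wlog (wrs (st k) w1) j1 = Some (t, v)"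
    using rlog_decodes[OF MDS rl] by blast
  then show ?thesis
  proof cases
    case 1
    have "\<not> tag_order st (OpW w' j') \<rho>" for w' j'
    proof
      assume o: "tag_order st (OpW w' j') \<rho>"
      then obtain z where "optag st (OpW w' j') = Tag z w'"
        using optag_write unfolding tag_order_def by blast
      then show False using o ov 1 unfolding tag_order_def by (auto simp: less_tag_def)
    qed
    then have "\<not> tag_order st \<pi> \<rho>" if "is_write \<pi>" for \<pi> using that by (cases \<pi>) auto
    then show ?thesis using ov 1 by blast
  next
    case 2
    let ?\<pi> = "OpW w1 j1"
    have pi: "in_Pi st ?\<pi>" using 2 unfolding in_Pi_def by (metis oplog.simps(1) option.distinct(1))
    have ot: "optag st ?\<pi> = t" "opval st ?\<pi> = v"
      using optv_eq_oplog[of k ?\<pi> "(t, v)"] 2 unfolding optag_def opval_def by auto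
    have to: "tag_order st ?\<pi> \<rho>" using pi rho ot ov rj unfolding tag_order_def by auto
    have last: "\<pi>' = ?\<pi> \<or> tag_order st \<pi>' ?\<pi>"
      if write': "is_write \<pi>'" and before: "tag_order st \<pi>' \<rho>" for \<pi>'
    proof (cases "optag st \<pi>' = t")
      case True
      obtain w' j' where p': "\<pi>' = OpW w' j'" using write' by (cases \<pi>') auto
      then show ?thesis using optag_write_inj[of w' j' w1 j1] before pi ot True
        unfolding tag_order_def by auto
    next
      case False
      then show ?thesis using before pi ot ov unfolding tag_order_def by auto
    qed
    have "is_write ?\<pi>" by simp
    then show ?thesis using to last ot ov by blast
  qed
qed

end

theorem theorem4:
  fixes n f :: nat
    and enc :: "nat \<Rightarrow> 'v \<Rightarrow> 'c"
    and dec :: "(nat \<Rightarrow> 'c option) \<Rightarrow> 'v"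
    and v0 :: 'v
    and st :: "nat \<Rightarrow> ('w::linorder, 'r, 'v, 'c) gst"
    and act :: "nat \<Rightarrow> ('w, 'r, 'v, 'c) action"
  assumes f_pos: "1 \<le> f"
    and f_bound: "2 * f + 1 \<le> n"
    and MDS: "\<forall>v S. S \<subseteq> {..<n} \<and> card S = n - f \<longrightarrow>
                dec (\<lambda>x. if x \<in> S then Some (enc x v) else None) = v"
    and exec: "soda_execution n f enc dec v0 st act"
    and chan: "reliable st act"
    and crashes: "card {i. i < n \<and> (\<exists>j. PS i \<in> crashed (st j))} \<le> f"
  shows
    "(\<nexists>\<pi>1 \<pi>2. precedes st \<pi>1 \<pi>2 \<and> tag_order st \<pi>2 \<pi>1)
     \<and> (\<forall>\<pi>1 \<pi>2. in_Pi st \<pi>1 \<and> in_Pi st \<pi>2 \<and> is_write \<pi>1 \<and> \<pi>2 \<noteq> \<pi>1 \<longrightarrow>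
                 tag_order st \<pi>1 \<pi>2 \<or> tag_order st \<pi>2 \<pi>1)
     \<and> (\<forall>\<rho>. in_Pi st \<rho> \<and> is_read \<rho> \<longrightarrow>
          ((\<nexists>\<pi>. is_write \<pi> \<and> tag_order st \<pi> \<rho>) \<longrightarrow> opval st \<rho> = v0) \<and>
          ((\<exists>\<pi>. is_write \<pi> \<and> tag_order st \<pi> \<rho>) \<longrightarrow>
             (\<exists>\<pi>. is_write \<pi> \<and> tag_order st \<pi> \<rho> \<and>
                 (\<forall>\<pi>'. is_write \<pi>' \<and> tag_order st \<pi>' \<rho> \<longrightarrow> \<pi>' = \<pi> \<or> tag_order st \<pi>' \<pi>) \<and>
                 opval st \<rho> = opval st \<pi>)))"
proof -
  interpret soda_run n f enc dec v0 st act
    using f_bound exec by unfold_locales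
  show ?thesis
    using no_real_time_inversion tag_order_total_write read_returns_last_write[OF MDS] by blast
qed

end
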